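(* Let $M$ be an $R$-module, $f:R\to T$ a ring morphism, and $N=M\otimes_RT$ regarded as a $T$-module. Then: (1) $\mathcal O_R(M)\subseteq f^{-1}(\mathcal O_T(N))$. (2) If moreover $f$ is injective, then $\mathcal O_R(M)=f^{-1}(\mathcal O_T(N))$ holds if $M$ is flat over $R$, or if the extension $R\subseteq T$ is pure, or if it is finite.
   Context: Rings are commutative and unital. For a ring $A$ and $A$-module $E$, $\mathcal O_A(E)=\{a\in A\mid E_a=0\}$, where $E_a$ is the localization at $\{a^n\mid n\in\mathbb N\}$. A ring extension $R\subseteq T$ is pure if $R\to T$ remains injective after tensoring over $R$ with any $R$-module; it is finite if $T$ is a finitely generated $R$-module. *)

theory Defs
  imports "HOL-Algebra.Algebra"
begin

(* Localization of a module at the powers of a single element, and     *)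
(* the set O_A(E) = {a \<in> A. E_a = 0}.                                *)
(* E_a is the set of fractions x / a^m, i.e. pairs (x,m) modulo        *)
(* (x,m) ~ (y,n)  iff  a^k (a^n x - a^m y) = 0 for some k.             *)

definition loc_rel :: "('r,'c) ring_scheme \<Rightarrow> ('r,'m) module \<Rightarrow> 'r \<Rightarrow> (('m \<times> nat) \<times> ('m \<times> nat)) set" where
  "loc_rel A E a = {((x,m),(y,n)). x \<in> carrier E \<and> y \<in> carrier E \<and>
     (\<exists>k::nat. (a [^]\<^bsub>A\<^esub> k) \<odot>\<^bsub>E\<^esub>
         (((a [^]\<^bsub>A\<^esub> n) \<odot>\<^bsub>E\<^esub> x) \<ominus>\<^bsub>E\<^esub> ((a [^]\<^bsub>A\<^esub> m) \<odot>\<^bsub>E\<^esub> y)) = \<zero>\<^bsub>E\<^esub>)}"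

definition loc_carrier :: "('r,'c) ring_scheme \<Rightarrow> ('r,'m) module \<Rightarrow> 'r \<Rightarrow> ('m \<times> nat) set set" where
  "loc_carrier A E a = (carrier E \<times> (UNIV :: nat set)) // loc_rel A E a"

definition loc_zero :: "('r,'c) ring_scheme \<Rightarrow> ('r,'m) module \<Rightarrow> 'r \<Rightarrow> ('m \<times> nat) set" where
  "loc_zero A E a = loc_rel A E a `` {(\<zero>\<^bsub>E\<^esub>, 0)}"

definition Ann_loc :: "('r,'c) ring_scheme \<Rightarrow> ('r,'m) module \<Rightarrow> 'r set" where
  "Ann_loc A E = {a \<in> carrier A. loc_carrier A E a = {loc_zero A E a}}"

(* Tensor products of R-modules, constructed as the free abelian group *)
(* on carrier A \<times> carrier B modulo the bilinearity relations.         *)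

definition fsupp_on :: "'x set \<Rightarrow> ('x \<Rightarrow> int) set" where
  "fsupp_on S = {g. finite {x. g x \<noteq> 0} \<and> {x. g x \<noteq> 0} \<subseteq> S}"

definition delta :: "'x \<Rightarrow> 'x \<Rightarrow> int" where
  "delta x = (\<lambda>y. if y = x then 1 else 0)"

definition push :: "('x \<Rightarrow> 'y) \<Rightarrow> ('x \<Rightarrow> int) \<Rightarrow> 'y \<Rightarrow> int" where
  "push \<phi> g = (\<lambda>y. \<Sum>x\<in>{x. g x \<noteq> 0 \<and> \<phi> x = y}. g x)"

definition tensor_gens :: "('r,'c) ring_scheme \<Rightarrow> ('r,'a) module \<Rightarrow> ('r,'b) module \<Rightarrow> ('a \<times> 'b \<Rightarrow> int) set" where
  "tensor_gens R A B =
     {(\<lambda>z. delta (a \<oplus>\<^bsub>A\<^esub> a', b) z - delta (a, b) z - delta (a', b) z) | a a' b.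
        a \<in> carrier A \<and> a' \<in> carrier A \<and> b \<in> carrier B}
   \<union> {(\<lambda>z. delta (a, b \<oplus>\<^bsub>B\<^esub> b') z - delta (a, b) z - delta (a, b') z) | a b b'.
        a \<in> carrier A \<and> b \<in> carrier B \<and> b' \<in> carrier B}
   \<union> {(\<lambda>z. delta (r \<odot>\<^bsub>A\<^esub> a, b) z - delta (a, r \<odot>\<^bsub>B\<^esub> b) z) | r a b.
        r \<in> carrier R \<and> a \<in> carrier A \<and> b \<in> carrier B}"

inductive_set zspan :: "('x \<Rightarrow> int) set \<Rightarrow> ('x \<Rightarrow> int) set" for S where
  zspan_zero: "(\<lambda>_. 0) \<in> zspan S"
| zspan_add: "g \<in> S \<Longrightarrow> h \<in> zspan S \<Longrightarrow> (\<lambda>x. h x + g x) \<in> zspan S"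
| zspan_diff: "g \<in> S \<Longrightarrow> h \<in> zspan S \<Longrightarrow> (\<lambda>x. h x - g x) \<in> zspan S"

definition tensor_rel :: "('r,'c) ring_scheme \<Rightarrow> ('r,'a) module \<Rightarrow> ('r,'b) module \<Rightarrow> (('a \<times> 'b \<Rightarrow> int) \<times> ('a \<times> 'b \<Rightarrow> int)) set" where
  "tensor_rel R A B = {(g,h). g \<in> fsupp_on (carrier A \<times> carrier B) \<and> h \<in> fsupp_on (carrier A \<times> carrier B)
      \<and> (\<lambda>z. g z - h z) \<in> zspan (tensor_gens R A B)}"

definition tensor_class :: "('r,'c) ring_scheme \<Rightarrow> ('r,'a) module \<Rightarrow> ('r,'b) module \<Rightarrow> ('a \<times> 'b \<Rightarrow> int) \<Rightarrow> ('a \<times> 'b \<Rightarrow> int) set" where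
  "tensor_class R A B g = tensor_rel R A B `` {g}"

definition pick_rep :: "'x set \<Rightarrow> 'x" where
  "pick_rep U = (Eps (\<lambda>g. g \<in> U))"

definition tensor :: "('r,'c) ring_scheme \<Rightarrow> ('r,'a) module \<Rightarrow> ('r,'b) module \<Rightarrow> ('r, ('a \<times> 'b \<Rightarrow> int) set) module" where
  "tensor R A B =
    \<lparr> carrier = fsupp_on (carrier A \<times> carrier B) // tensor_rel R A B,
      monoid.mult = undefined, monoid.one = undefined,
      ring.zero = tensor_class R A B (\<lambda>_. 0),
      ring.add = (\<lambda>U V. tensor_class R A B (\<lambda>z. pick_rep U z + pick_rep V z)),
      module.smult = (\<lambda>r U. tensor_class R A B (push (\<lambda>(a,b). (r \<odot>\<^bsub>A\<^esub> a, b)) (pick_rep U))) \<rparr>"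

definition tensor_map :: "('r,'c) ring_scheme \<Rightarrow> ('r,'a2) module \<Rightarrow> ('r,'b2) module
     \<Rightarrow> ('a \<Rightarrow> 'a2) \<Rightarrow> ('b \<Rightarrow> 'b2) \<Rightarrow> ('a \<times> 'b \<Rightarrow> int) set \<Rightarrow> ('a2 \<times> 'b2 \<Rightarrow> int) set" where
  "tensor_map R A' B' u v U = tensor_class R A' B' (push (\<lambda>(a,b). (u a, v b)) (pick_rep U))"

definition linear_map :: "('r,'c) ring_scheme \<Rightarrow> ('r,'a) module \<Rightarrow> ('r,'b) module \<Rightarrow> ('a \<Rightarrow> 'b) \<Rightarrow> bool" where
  "linear_map R P Q u \<longleftrightarrow> (\<forall>x\<in>carrier P. u x \<in> carrier Q)
     \<and> (\<forall>x\<in>carrier P. \<forall>y\<in>carrier P. u (x \<oplus>\<^bsub>P\<^esub> y) = u x \<oplus>\<^bsub>Q\<^esub> u y)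
     \<and> (\<forall>r\<in>carrier R. \<forall>x\<in>carrier P. u (r \<odot>\<^bsub>P\<^esub> x) = r \<odot>\<^bsub>Q\<^esub> u x)"

definition self_module :: "('r,'c) ring_scheme \<Rightarrow> ('r,'r) module" where
  "self_module R = \<lparr> carrier = carrier R, monoid.mult = (\<otimes>\<^bsub>R\<^esub>), monoid.one = \<one>\<^bsub>R\<^esub>,
      ring.zero = \<zero>\<^bsub>R\<^esub>, ring.add = (\<oplus>\<^bsub>R\<^esub>), module.smult = (\<otimes>\<^bsub>R\<^esub>) \<rparr>"

definition restrict_scalars :: "('r \<Rightarrow> 't) \<Rightarrow> ('t,'d) ring_scheme \<Rightarrow> ('r,'t) module" where
  "restrict_scalars f T = \<lparr> carrier = carrier T, monoid.mult = (\<otimes>\<^bsub>T\<^esub>), monoid.one = \<one>\<^bsub>T\<^esub>, ring.zero = \<zero>\<^bsub>T\<^esub>,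
      ring.add = (\<oplus>\<^bsub>T\<^esub>), module.smult = (\<lambda>r t. f r \<otimes>\<^bsub>T\<^esub> t) \<rparr>"

definition base_change :: "('r,'c) ring_scheme \<Rightarrow> ('t,'d) ring_scheme \<Rightarrow> ('r \<Rightarrow> 't)
     \<Rightarrow> ('r,'m) module \<Rightarrow> ('t, ('m \<times> 't \<Rightarrow> int) set) module" where
  "base_change R T f M =
    (let P = tensor R M (restrict_scalars f T) in
     \<lparr> carrier = carrier P, monoid.mult = undefined, monoid.one = undefined, ring.zero = \<zero>\<^bsub>P\<^esub>, ring.add = (\<oplus>\<^bsub>P\<^esub>),
       module.smult = (\<lambda>s U. tensor_class R M (restrict_scalars f T)
                  (push (\<lambda>(m,t). (m, s \<otimes>\<^bsub>T\<^esub> t)) (pick_rep U))) \<rparr>)"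

(* The test modules range over modules whose carriers live in the type 'p. *)
definition flat :: "'p itself \<Rightarrow> ('r,'c) ring_scheme \<Rightarrow> ('r,'m) module \<Rightarrow> bool" where
  "flat _ R M \<longleftrightarrow> (\<forall>(P::('r,'p) module) (Q::('r,'p) module) u.
      module R P \<and> module R Q \<and> linear_map R P Q u \<and> inj_on u (carrier P) \<longrightarrow>
      inj_on (tensor_map R Q M u id) (carrier (tensor R P M)))"

(* Purity of R \<rightarrow> T: for every R-module P, id_P \<otimes> f : P \<otimes> R \<rightarrow> P \<otimes> T is
   injective. Test modules range over modules with carriers in type 'p. *)
definition pure_ext :: "'p itself \<Rightarrow> ('r,'c) ring_scheme \<Rightarrow> ('t,'d) ring_scheme \<Rightarrow> ('r \<Rightarrow> 't) \<Rightarrow> bool" where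
  "pure_ext _ R T f \<longleftrightarrow> (\<forall>P::('r,'p) module. module R P \<longrightarrow>
      inj_on (tensor_map R P (restrict_scalars f T) id f) (carrier (tensor R P (self_module R))))"

definition finite_ext :: "('r,'c) ring_scheme \<Rightarrow> ('t,'d) ring_scheme \<Rightarrow> ('r \<Rightarrow> 't) \<Rightarrow> bool" where
  "finite_ext R T f \<longleftrightarrow> (\<exists>S. finite S \<and> S \<subseteq> carrier T \<and>
      (\<forall>t\<in>carrier T. \<exists>c. c \<in> S \<rightarrow> carrier R \<and>
          t = (\<Oplus>\<^bsub>T\<^esub> s\<in>S. f (c s) \<otimes>\<^bsub>T\<^esub> s)))"

end

(*
  If a^k x = 0, then f(a)^k (x \<otimes> t) = a^k x \<otimes> t = 0; taking a common exponent for the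
  finitely many first factors of an element of M \<otimes>\<^sub>R T gives (1).

  Conversely, if f(a) is locally nilpotent on M \<otimes>\<^sub>R T, then for every x some
  f(a)^k (x \<otimes> 1) = a^k x \<otimes> 1 vanishes, so it suffices that y \<otimes> 1 = 0 forces y = 0.
  For a pure extension this is the definition applied to M; for flat M it follows by tensoring
  the injection f(R) \<subseteq> T of R-modules with M.  For a finite extension one uses the minors of a
  relation matrix for generators of T (see the last section).
*)

theory Submission
  imports Defs "HOL-Combinatorics.Transposition"
begin

section \<open>Finitely supported integer-valued functions\<close>

lemma fsupp_on_finite: "g \<in> fsupp_on S \<Longrightarrow> finite {x. g x \<noteq> 0}"
  by (simp add: fsupp_on_def)

lemma fsupp_on_subset: "g \<in> fsupp_on S \<Longrightarrow> g x \<noteq> 0 \<Longrightarrow> x \<in> S"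
  by (auto simp add: fsupp_on_def)

lemma fsupp_on_zero [simp]: "(\<lambda>_. 0) \<in> fsupp_on S"
  by (simp add: fsupp_on_def)

lemma fsupp_on_support_subset:
  assumes "g \<in> fsupp_on S" "h \<in> fsupp_on S" "{x. k x \<noteq> 0} \<subseteq> {x. g x \<noteq> 0} \<union> {x. h x \<noteq> 0}"
  shows "k \<in> fsupp_on S"
proof -
  have "finite ({x. g x \<noteq> 0} \<union> {x. h x \<noteq> 0})" "{x. g x \<noteq> 0} \<union> {x. h x \<noteq> 0} \<subseteq> S"
    using assms(1,2) by (auto simp: fsupp_on_def)
  then show ?thesis
    unfolding fsupp_on_def mem_Collect_eq using finite_subset[OF assms(3)] assms(3) by blast
qed

lemma fsupp_on_add: "g \<in> fsupp_on S \<Longrightarrow> h \<in> fsupp_on S \<Longrightarrow> (\<lambda>x. g x + h x) \<in> fsupp_on S"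
  by (erule fsupp_on_support_subset) auto

lemma fsupp_on_diff: "g \<in> fsupp_on S \<Longrightarrow> h \<in> fsupp_on S \<Longrightarrow> (\<lambda>x. g x - h x) \<in> fsupp_on S"
  by (erule fsupp_on_support_subset) auto

lemma fsupp_on_uminus: "g \<in> fsupp_on S \<Longrightarrow> (\<lambda>x. - g x) \<in> fsupp_on S"
  unfolding fsupp_on_def by auto

lemma fsupp_on_delta: "x \<in> S \<Longrightarrow> delta x \<in> fsupp_on S"
  unfolding fsupp_on_def delta_def by auto

lemma finite_delta_support: "finite {y. delta x y \<noteq> 0}"
  using fsupp_on_finite[OF fsupp_on_delta[of x UNIV]] by simp

lemma sum_delta_expansion:
  assumes "finite D" "{x. g x \<noteq> 0} \<subseteq> D"
  shows "g y = (\<Sum>x\<in>D. g x * delta x y)"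
proof (cases "y \<in> D")
  case True
  have "(\<Sum>x\<in>D. g x * delta x y) = (\<Sum>x\<in>{y}. g x * delta x y)"
    by (rule sum.mono_neutral_right) (auto simp: assms True delta_def)
  then show ?thesis by (simp add: delta_def)
next
  case False
  then have "g y = 0" using assms(2) by auto
  moreover have "(\<Sum>x\<in>D. g x * delta x y) = 0"
    using False by (auto simp: delta_def intro: sum.neutral)
  ultimately show ?thesis by simp
qed

lemma zspan_base: "g \<in> S \<Longrightarrow> g \<in> zspan S"
  using zspan_add[OF _ zspan_zero, of g S] by simp

lemma zspan_add_closed: "h \<in> zspan S \<Longrightarrow> g \<in> zspan S \<Longrightarrow> (\<lambda>x. g x + h x) \<in> zspan S"
proof (induction h rule: zspan.induct)
  case zspan_zero then show ?case by (simp add: zspan.zspan_zero)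
next
  case (zspan_add s h)
  have "(\<lambda>x. (g x + h x) + s x) \<in> zspan S"
    using zspan.zspan_add[OF zspan_add(1) zspan_add(3)[OF zspan_add(4)]] .
  then show ?case by (simp add: add.assoc)
next
  case (zspan_diff s h)
  have "(\<lambda>x. (g x + h x) - s x) \<in> zspan S"
    using zspan.zspan_diff[OF zspan_diff(1) zspan_diff(3)[OF zspan_diff(4)]] .
  then show ?case by (simp add: algebra_simps)
qed

lemma zspan_uminus_closed: "h \<in> zspan S \<Longrightarrow> (\<lambda>x. - h x) \<in> zspan S"
proof (induction h rule: zspan.induct)
  case zspan_zero then show ?case by (simp add: zspan.zspan_zero)
next
  case (zspan_add s h)
  have "(\<lambda>x. (- h x) - s x) \<in> zspan S" using zspan.zspan_diff[OF zspan_add(1) zspan_add(3)] .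
  then show ?case by (simp add: algebra_simps)
next
  case (zspan_diff s h)
  have "(\<lambda>x. (- h x) + s x) \<in> zspan S" using zspan.zspan_add[OF zspan_diff(1) zspan_diff(3)] .
  then show ?case by (simp add: algebra_simps)
qed

lemma zspan_diff_closed: "g \<in> zspan S \<Longrightarrow> h \<in> zspan S \<Longrightarrow> (\<lambda>x. g x - h x) \<in> zspan S"
  using zspan_add_closed[OF zspan_uminus_closed[of h S], of g] by simp

lemma zspan_cong: "g \<in> zspan S \<Longrightarrow> (\<And>x. g x = h x) \<Longrightarrow> h \<in> zspan S"
  by (subgoal_tac "g = h") auto

lemma zspan_nat_smult: "h \<in> zspan S \<Longrightarrow> (\<lambda>x. int n * h x) \<in> zspan S"
proof (induction n)
  case 0 then show ?case using zspan_zero by simp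
next
  case (Suc n)
  have "(\<lambda>x. int n * h x + h x) \<in> zspan S" using zspan_add_closed[OF Suc(2) Suc(1)[OF Suc(2)]] .
  then show ?case by (simp add: algebra_simps)
qed

lemma zspan_int_smult:
  assumes "h \<in> zspan S"
  shows "(\<lambda>x. c * h x) \<in> zspan S"
proof (cases "c \<ge> 0")
  case True
  then show ?thesis using zspan_nat_smult[OF assms, of "nat c"] by simp
next
  case False
  then show ?thesis using zspan_uminus_closed[OF zspan_nat_smult[OF assms, of "nat (- c)"]] by simp
qed

lemma zspan_sum:
  "finite I \<Longrightarrow> (\<And>i. i \<in> I \<Longrightarrow> h i \<in> zspan S) \<Longrightarrow> (\<lambda>x. \<Sum>i\<in>I. h i x) \<in> zspan S"
proof (induction I rule: finite_induct)
  case empty then show ?case using zspan_zero by simp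
next
  case (insert i I)
  have "(\<lambda>x. (\<Sum>i\<in>I. h i x) + h i x) \<in> zspan S"
    using zspan_add_closed[OF _ insert(3)] insert(4) by auto
  then show ?case using insert(1,2) by (simp add: add.commute)
qed

lemma zspan_fsupp_on:
  assumes "S \<subseteq> fsupp_on U" "g \<in> zspan S"
  shows "g \<in> fsupp_on U"
  using assms(2)
proof (induction g rule: zspan.induct)
  case zspan_zero then show ?case by simp
next
  case (zspan_add g h) then show ?case using fsupp_on_add assms(1) by blast
next
  case (zspan_diff g h) then show ?case using fsupp_on_diff assms(1) by blast
qed

lemma push_eq_sum:
  "finite D \<Longrightarrow> {x. g x \<noteq> 0} \<subseteq> D \<Longrightarrow> push \<phi> g y = (\<Sum>x\<in>{x\<in>D. \<phi> x = y}. g x)"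
  unfolding push_def by (rule sum.mono_neutral_left) auto

lemma push_eq_sum_delta:
  assumes D: "finite D" "{x. g x \<noteq> 0} \<subseteq> D"
  shows "push \<phi> g y = (\<Sum>x\<in>D. g x * delta (\<phi> x) y)"
proof -
  have "push \<phi> g y = (\<Sum>x\<in>{x\<in>D. \<phi> x = y}. g x * delta (\<phi> x) y)"
    unfolding push_eq_sum[OF D] by (rule sum.cong) (auto simp: delta_def)
  also have "\<dots> = (\<Sum>x\<in>D. g x * delta (\<phi> x) y)"
    by (rule sum.mono_neutral_left) (auto simp: D delta_def)
  finally show ?thesis .
qed

lemma push_support: "{y. push \<phi> g y \<noteq> 0} \<subseteq> \<phi> ` {x. g x \<noteq> 0}"
proof
  fix y assume "y \<in> {y. push \<phi> g y \<noteq> 0}"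
  then have "(\<Sum>x\<in>{x. g x \<noteq> 0 \<and> \<phi> x = y}. g x) \<noteq> 0" by (simp add: push_def)
  then obtain x where "x \<in> {x. g x \<noteq> 0 \<and> \<phi> x = y}" by (meson sum.not_neutral_contains_not_neutral)
  then show "y \<in> \<phi> ` {x. g x \<noteq> 0}" by auto
qed

lemma push_fsupp_on:
  assumes g: "g \<in> fsupp_on U" and \<phi>: "\<And>x. x \<in> U \<Longrightarrow> \<phi> x \<in> V"
  shows "push \<phi> g \<in> fsupp_on V"
proof -
  have "\<phi> ` {x. g x \<noteq> 0} \<subseteq> V" using g \<phi> by (auto simp: fsupp_on_def)
  then show ?thesis
    using push_support[of \<phi> g] g unfolding fsupp_on_def by (auto intro: finite_subset)
qed

lemma push_add:
  assumes "finite {x. g x \<noteq> 0}" "finite {x. h x \<noteq> 0}"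
  shows "push \<phi> (\<lambda>x. g x + h x) y = push \<phi> g y + push \<phi> h y"
proof -
  let ?D = "{x. g x \<noteq> 0} \<union> {x. h x \<noteq> 0}"
  have D: "finite ?D" using assms by simp
  have "push \<phi> (\<lambda>x. g x + h x) y = (\<Sum>x\<in>{x\<in>?D. \<phi> x = y}. g x + h x)"
    by (rule push_eq_sum[OF D]) auto
  also have "\<dots> = push \<phi> g y + push \<phi> h y"
    using push_eq_sum[OF D, of g \<phi> y] push_eq_sum[OF D, of h \<phi> y] by (auto simp: sum.distrib)
  finally show ?thesis .
qed

lemma push_diff:
  assumes "finite {x. g x \<noteq> 0}" "finite {x. h x \<noteq> 0}"
  shows "push \<phi> (\<lambda>x. g x - h x) y = push \<phi> g y - push \<phi> h y"
proof -
  let ?D = "{x. g x \<noteq> 0} \<union> {x. h x \<noteq> 0}"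
  have D: "finite ?D" using assms by simp
  have "push \<phi> (\<lambda>x. g x - h x) y = (\<Sum>x\<in>{x\<in>?D. \<phi> x = y}. g x - h x)"
    by (rule push_eq_sum[OF D]) auto
  also have "\<dots> = push \<phi> g y - push \<phi> h y"
    using push_eq_sum[OF D, of g \<phi> y] push_eq_sum[OF D, of h \<phi> y] by (auto simp: sum_subtractf)
  finally show ?thesis .
qed

lemma push_zero: "push \<phi> (\<lambda>_. 0) = (\<lambda>_. 0)"
  unfolding push_def by auto

lemma push_delta: "push \<phi> (delta x) = delta (\<phi> x)"
proof
  fix y
  have "push \<phi> (delta x) y = (\<Sum>z\<in>{z\<in>{x}. \<phi> z = y}. delta x z)"
    by (rule push_eq_sum) (auto simp: delta_def)
  also have "\<dots> = delta (\<phi> x) y"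
  proof (cases "\<phi> x = y")
    case True
    then have "{z\<in>{x}. \<phi> z = y} = {x}" by auto
    then show ?thesis using True by (simp add: delta_def)
  next
    case False
    then have "{z\<in>{x}. \<phi> z = y} = {}" by auto
    then show ?thesis using False by (simp add: delta_def)
  qed
  finally show "push \<phi> (delta x) y = delta (\<phi> x) y" .
qed

lemma push_delta_diff: "push \<phi> (\<lambda>z. delta x z - delta y z) = (\<lambda>z. delta (\<phi> x) z - delta (\<phi> y) z)"
  by (rule ext) (simp add: push_diff[OF finite_delta_support finite_delta_support] push_delta)

lemma push_delta_diff3:
  "push \<phi> (\<lambda>z. delta x z - delta y z - delta w z)
     = (\<lambda>z. delta (\<phi> x) z - delta (\<phi> y) z - delta (\<phi> w) z)"
proof -
  have fin: "finite {z. delta x z - delta y z \<noteq> 0}"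
    using fsupp_on_finite[OF fsupp_on_diff[OF fsupp_on_delta[of x UNIV] fsupp_on_delta[of y UNIV]]] by simp
  show ?thesis
  proof
    fix z
    show "push \<phi> (\<lambda>z. delta x z - delta y z - delta w z) z = delta (\<phi> x) z - delta (\<phi> y) z - delta (\<phi> w) z"
      unfolding push_diff[OF fin finite_delta_support] push_delta_diff push_delta ..
  qed
qed

lemma push_comp:
  assumes fg: "finite {x. g x \<noteq> 0}"
  shows "push \<phi> (push \<psi> g) = push (\<phi> \<circ> \<psi>) g"
proof
  fix y
  let ?D = "{x. g x \<noteq> 0}"
  have "push \<phi> (push \<psi> g) y = (\<Sum>z\<in>\<psi> ` ?D. push \<psi> g z * delta (\<phi> z) y)"
    by (rule push_eq_sum_delta) (use fg push_support[of \<psi> g] in auto)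
  also have "\<dots> = (\<Sum>z\<in>\<psi> ` ?D. (\<Sum>x\<in>?D. g x * delta (\<psi> x) z) * delta (\<phi> z) y)"
    by (rule sum.cong[OF refl]) (simp add: push_eq_sum_delta[OF fg])
  also have "\<dots> = (\<Sum>z\<in>\<psi> ` ?D. (\<Sum>x\<in>?D. g x * delta (\<psi> x) z * delta (\<phi> z) y))"
    by (simp add: sum_distrib_right)
  also have "\<dots> = (\<Sum>x\<in>?D. (\<Sum>z\<in>\<psi> ` ?D. g x * delta (\<psi> x) z * delta (\<phi> z) y))"
    by (rule sum.swap)
  also have "\<dots> = (\<Sum>x\<in>?D. g x * delta ((\<phi> \<circ> \<psi>) x) y)"
  proof (rule sum.cong[OF refl])
    fix x assume x: "x \<in> ?D"
    have "(\<Sum>z\<in>\<psi> ` ?D. g x * delta (\<psi> x) z * delta (\<phi> z) y)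
        = (\<Sum>z\<in>{\<psi> x}. g x * delta (\<psi> x) z * delta (\<phi> z) y)"
      by (rule sum.mono_neutral_right) (use x fg in \<open>auto simp: delta_def\<close>)
    then show "(\<Sum>z\<in>\<psi> ` ?D. g x * delta (\<psi> x) z * delta (\<phi> z) y) = g x * delta ((\<phi> \<circ> \<psi>) x) y"
      by (simp add: delta_def)
  qed
  also have "\<dots> = push (\<phi> \<circ> \<psi>) g y" by (rule push_eq_sum_delta[OF fg, symmetric]) simp
  finally show "push \<phi> (push \<psi> g) y = push (\<phi> \<circ> \<psi>) g y" .
qed

lemma push_cong: "(\<And>x. g x \<noteq> 0 \<Longrightarrow> \<phi> x = \<psi> x) \<Longrightarrow> push \<phi> g = push \<psi> g"
  unfolding push_def by (rule ext) (rule sum.cong, auto)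

lemma push_id:
  assumes "finite {x. g x \<noteq> 0}" "\<And>x. g x \<noteq> 0 \<Longrightarrow> \<phi> x = x"
  shows "push \<phi> g = g"
proof
  fix y
  have "push \<phi> g y = push id g y" using push_cong[of g \<phi> id] assms(2) by simp
  then show "push \<phi> g y = g y"
    using push_eq_sum_delta[OF assms(1) order_refl, of id y] sum_delta_expansion[OF assms(1) order_refl, of y]
    by simp
qed

lemma push_zspan:
  assumes "S \<subseteq> fsupp_on U" and "\<And>s. s \<in> S \<Longrightarrow> push \<phi> s \<in> zspan S'" and "g \<in> zspan S"
  shows "push \<phi> g \<in> zspan S'"
  using assms(3)
proof (induction g rule: zspan.induct)
  case zspan_zero then show ?case by (simp add: push_zero zspan.zspan_zero)
next
  case (zspan_add s h)
  have fin_h: "finite {x. h x \<noteq> 0}" using zspan_fsupp_on[OF assms(1) zspan_add(2)] fsupp_on_finite by blast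
  have fin_s: "finite {x. s x \<noteq> 0}" using assms(1) zspan_add(1) fsupp_on_finite by blast
  have "(\<lambda>y. push \<phi> h y + push \<phi> s y) \<in> zspan S'"
    using zspan_add_closed[OF assms(2)[OF zspan_add(1)] zspan_add(3)] .
  then show ?case by (rule zspan_cong) (simp add: push_add[OF fin_h fin_s])
next
  case (zspan_diff s h)
  have fin_h: "finite {x. h x \<noteq> 0}" using zspan_fsupp_on[OF assms(1) zspan_diff(2)] fsupp_on_finite by blast
  have fin_s: "finite {x. s x \<noteq> 0}" using assms(1) zspan_diff(1) fsupp_on_finite by blast
  have "(\<lambda>y. push \<phi> h y - push \<phi> s y) \<in> zspan S'"
    using zspan_diff_closed[OF zspan_diff(3) assms(2)[OF zspan_diff(1)]] .
  then show ?case by (rule zspan_cong) (simp add: push_diff[OF fin_h fin_s])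
qed

section \<open>Tensor products\<close>

text \<open>A formal sum \<open>g\<close> stands for \<open>\<Sum> g(a,b) \<cdot> (a \<otimes> b)\<close>, and it represents zero in \<open>A \<otimes>\<^sub>R B\<close> iff it
  lies in \<open>tensor_relations R A B\<close>; so \<open>delta (a, b) \<in> tensor_relations R A B\<close> says \<open>a \<otimes> b = 0\<close>.\<close>

abbreviation formal_sums :: "('r,'a) module \<Rightarrow> ('r,'b) module \<Rightarrow> ('a \<times> 'b \<Rightarrow> int) set" where
  "formal_sums A B \<equiv> fsupp_on (carrier A \<times> carrier B)"

abbreviation tensor_relations ::
    "('r,'c) ring_scheme \<Rightarrow> ('r,'a) module \<Rightarrow> ('r,'b) module \<Rightarrow> ('a \<times> 'b \<Rightarrow> int) set" where
  "tensor_relations R A B \<equiv> zspan (tensor_gens R A B)"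

lemma tensor_gensE:
  assumes "s \<in> tensor_gens R A B"
  obtains (add_left) a a' b where "s = (\<lambda>z. delta (a \<oplus>\<^bsub>A\<^esub> a', b) z - delta (a, b) z - delta (a', b) z)"
      "a \<in> carrier A" "a' \<in> carrier A" "b \<in> carrier B"
  | (add_right) a b b' where "s = (\<lambda>z. delta (a, b \<oplus>\<^bsub>B\<^esub> b') z - delta (a, b) z - delta (a, b') z)"
      "a \<in> carrier A" "b \<in> carrier B" "b' \<in> carrier B"
  | (smult) r a b where "s = (\<lambda>z. delta (r \<odot>\<^bsub>A\<^esub> a, b) z - delta (a, r \<odot>\<^bsub>B\<^esub> b) z)"
      "r \<in> carrier R" "a \<in> carrier A" "b \<in> carrier B"
  using assms unfolding tensor_gens_def by blast

lemma tensor_relations_add_left: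
  "a \<in> carrier A \<Longrightarrow> a' \<in> carrier A \<Longrightarrow> b \<in> carrier B \<Longrightarrow>
   (\<lambda>z. delta (a \<oplus>\<^bsub>A\<^esub> a', b) z - delta (a, b) z - delta (a', b) z) \<in> tensor_relations R A B"
  by (rule zspan_base) (unfold tensor_gens_def, blast)

lemma tensor_relations_add_right:
  "a \<in> carrier A \<Longrightarrow> b \<in> carrier B \<Longrightarrow> b' \<in> carrier B \<Longrightarrow>
   (\<lambda>z. delta (a, b \<oplus>\<^bsub>B\<^esub> b') z - delta (a, b) z - delta (a, b') z) \<in> tensor_relations R A B"
  by (rule zspan_base) (unfold tensor_gens_def, blast)

lemma tensor_relations_smult:
  "r \<in> carrier R \<Longrightarrow> a \<in> carrier A \<Longrightarrow> b \<in> carrier B \<Longrightarrow>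
   (\<lambda>z. delta (r \<odot>\<^bsub>A\<^esub> a, b) z - delta (a, r \<odot>\<^bsub>B\<^esub> b) z) \<in> tensor_relations R A B"
  by (rule zspan_base) (unfold tensor_gens_def, blast)

lemma tensor_relations_zero_left:
  assumes "module R A" "b \<in> carrier B"
  shows "delta (\<zero>\<^bsub>A\<^esub>, b) \<in> tensor_relations R A B"
proof -
  interpret A: module R A by (rule assms(1))
  have "(\<lambda>z. - (delta (\<zero>\<^bsub>A\<^esub> \<oplus>\<^bsub>A\<^esub> \<zero>\<^bsub>A\<^esub>, b) z - delta (\<zero>\<^bsub>A\<^esub>, b) z - delta (\<zero>\<^bsub>A\<^esub>, b) z))
      \<in> tensor_relations R A B"
    by (rule zspan_uminus_closed[OF tensor_relations_add_left]) (use assms(2) in auto)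
  then show ?thesis by (rule zspan_cong) simp
qed

lemma tensor_relations_annihilated:
  assumes A: "module R A" and r: "r \<in> carrier R" and a: "a \<in> carrier A" and b: "b \<in> carrier B"
    and ra: "r \<odot>\<^bsub>A\<^esub> a = \<zero>\<^bsub>A\<^esub>"
  shows "delta (a, r \<odot>\<^bsub>B\<^esub> b) \<in> tensor_relations R A B"
proof -
  have "(\<lambda>z. delta (\<zero>\<^bsub>A\<^esub>, b) z - (delta (r \<odot>\<^bsub>A\<^esub> a, b) z - delta (a, r \<odot>\<^bsub>B\<^esub> b) z)) \<in> tensor_relations R A B"
    by (rule zspan_diff_closed[OF tensor_relations_zero_left[OF A b] tensor_relations_smult[OF r a b]])
  then show ?thesis by (rule zspan_cong) (simp add: ra)
qed

lemma tensor_gens_formal_sums: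
  assumes "module R A" "module R B"
  shows "tensor_gens R A B \<subseteq> formal_sums A B"
proof -
  interpret A: module R A by (rule assms(1))
  interpret B: module R B by (rule assms(2))
  show ?thesis
    unfolding tensor_gens_def by (auto intro!: fsupp_on_diff fsupp_on_delta)
qed

lemma tensor_relations_formal_sums:
  "module R A \<Longrightarrow> module R B \<Longrightarrow> g \<in> tensor_relations R A B \<Longrightarrow> g \<in> formal_sums A B"
  by (rule zspan_fsupp_on[OF tensor_gens_formal_sums])

context
  fixes R :: "('r,'c) ring_scheme" and A :: "('r,'a) module" and B :: "('r,'b) module"
begin

lemma equiv_tensor_rel: "equiv (formal_sums A B) (tensor_rel R A B)"
proof (rule equivI)
  show "tensor_rel R A B \<subseteq> formal_sums A B \<times> formal_sums A B" unfolding tensor_rel_def by auto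
  show "refl_on (formal_sums A B) (tensor_rel R A B)"
    unfolding refl_on_def tensor_rel_def by (auto intro: zspan.zspan_zero)
  show "sym (tensor_rel R A B)"
    unfolding sym_def tensor_rel_def by (auto dest: zspan_uminus_closed)
  show "trans (tensor_rel R A B)"
    unfolding trans_def tensor_rel_def
  proof clarsimp
    fix x y z
    assume "(\<lambda>z. x z - y z) \<in> tensor_relations R A B" "(\<lambda>z'. y z' - z z') \<in> tensor_relations R A B"
    from zspan_add_closed[OF this(2) this(1)] show "(\<lambda>z'. x z' - z z') \<in> tensor_relations R A B"
      by simp
  qed
qed

lemma tensor_class_in_quotient:
  "g \<in> formal_sums A B \<Longrightarrow> tensor_class R A B g \<in> formal_sums A B // tensor_rel R A B"
  unfolding tensor_class_def by (rule quotientI)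

lemma tensor_class_eq_iff:
  "g \<in> formal_sums A B \<Longrightarrow> h \<in> formal_sums A B \<Longrightarrow>
   tensor_class R A B g = tensor_class R A B h \<longleftrightarrow> (\<lambda>z. g z - h z) \<in> tensor_relations R A B"
  unfolding tensor_class_def using eq_equiv_class_iff[OF equiv_tensor_rel] by (simp add: tensor_rel_def)

lemma tensor_class_eq_zero_iff:
  "g \<in> formal_sums A B \<Longrightarrow>
   tensor_class R A B g = tensor_class R A B (\<lambda>_. 0) \<longleftrightarrow> g \<in> tensor_relations R A B"
  using tensor_class_eq_iff[of g "\<lambda>_. 0"] by simp

lemma pick_rep_tensor_class:
  assumes U: "U \<in> formal_sums A B // tensor_rel R A B"
  shows "pick_rep U \<in> formal_sums A B" "tensor_class R A B (pick_rep U) = U"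
proof -
  obtain g where g: "g \<in> formal_sums A B" "U = tensor_rel R A B `` {g}" using U by (rule quotientE)
  have "g \<in> U" using g equiv_class_self[OF equiv_tensor_rel] by simp
  then have "pick_rep U \<in> U" unfolding pick_rep_def by (rule someI[where P="\<lambda>g. g \<in> U"])
  then have gU: "(g, pick_rep U) \<in> tensor_rel R A B" using g by simp
  then show "pick_rep U \<in> formal_sums A B" by (simp add: tensor_rel_def)
  show "tensor_class R A B (pick_rep U) = U"
    using gU g equiv_class_eq_iff[OF equiv_tensor_rel] unfolding tensor_class_def by metis
qed

lemma pick_rep_tensor_class_diff:
  assumes g: "g \<in> formal_sums A B"
  shows "(\<lambda>z. pick_rep (tensor_class R A B g) z - g z) \<in> tensor_relations R A B"
  using tensor_class_eq_iff[OF pick_rep_tensor_class(1)[OF tensor_class_in_quotient[OF g]] g]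
    pick_rep_tensor_class(2)[OF tensor_class_in_quotient[OF g]] by simp

lemma tensor_class_add:
  assumes g: "g \<in> formal_sums A B" and h: "h \<in> formal_sums A B"
  shows "tensor_class R A B (\<lambda>z. pick_rep (tensor_class R A B g) z + pick_rep (tensor_class R A B h) z)
       = tensor_class R A B (\<lambda>z. g z + h z)"
proof (rule tensor_class_eq_iff[THEN iffD2])
  show "(\<lambda>z. pick_rep (tensor_class R A B g) z + pick_rep (tensor_class R A B h) z) \<in> formal_sums A B"
    by (intro fsupp_on_add pick_rep_tensor_class tensor_class_in_quotient g h)
  show "(\<lambda>z. g z + h z) \<in> formal_sums A B" by (rule fsupp_on_add[OF g h])
  show "(\<lambda>z. (pick_rep (tensor_class R A B g) z + pick_rep (tensor_class R A B h) z) - (g z + h z))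
      \<in> tensor_relations R A B"
    using zspan_add_closed[OF pick_rep_tensor_class_diff[OF h] pick_rep_tensor_class_diff[OF g]]
    by (simp add: algebra_simps)
qed

end

lemma tensor_simps [simp]:
  "carrier (tensor R A B) = formal_sums A B // tensor_rel R A B"
  "\<zero>\<^bsub>tensor R A B\<^esub> = tensor_class R A B (\<lambda>_. 0)"
  by (simp_all add: tensor_def)

definition eval_formal :: "('e,'x) ring_scheme \<Rightarrow> ('p \<Rightarrow> 'e) \<Rightarrow> ('p \<Rightarrow> int) \<Rightarrow> 'e" where
  "eval_formal E \<beta> g = (\<Oplus>\<^bsub>E\<^esub>z\<in>{z. g z \<noteq> 0}. add_pow E (g z) (\<beta> z))"

context
  fixes E :: "('e,'x) ring_scheme" and \<beta> :: "'p \<Rightarrow> 'e" and C :: "'p set"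
  assumes E: "abelian_group E" and \<beta>: "\<And>z. z \<in> C \<Longrightarrow> \<beta> z \<in> carrier E"
begin

interpretation E: abelian_group E by (rule E)

lemma add_pow_int_zero [simp]: "add_pow E (0::int) x = \<zero>\<^bsub>E\<^esub>"
  by (simp add: add_pow_def)

lemma eval_formal_eq_finsum:
  "finite D \<Longrightarrow> {z. g z \<noteq> 0} \<subseteq> D \<Longrightarrow> D \<subseteq> C \<Longrightarrow>
   eval_formal E \<beta> g = (\<Oplus>\<^bsub>E\<^esub>z\<in>D. add_pow E (g z) (\<beta> z))"
  unfolding eval_formal_def
  by (rule E.add.finprod_mono_neutral_cong_left) (auto intro!: \<beta>)

lemma eval_formal_closed: "g \<in> fsupp_on C \<Longrightarrow> eval_formal E \<beta> g \<in> carrier E"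
  unfolding eval_formal_def by (rule E.finsum_closed) (auto intro!: \<beta> dest: fsupp_on_subset)

lemma eval_formal_add:
  assumes g: "g \<in> fsupp_on C" and h: "h \<in> fsupp_on C"
  shows "eval_formal E \<beta> (\<lambda>z. g z + h z) = eval_formal E \<beta> g \<oplus>\<^bsub>E\<^esub> eval_formal E \<beta> h"
proof -
  let ?D = "{z. g z \<noteq> 0} \<union> {z. h z \<noteq> 0}"
  have D: "finite ?D" "?D \<subseteq> C" using g h by (auto simp: fsupp_on_def)
  then have \<beta>D: "\<beta> z \<in> carrier E" if "z \<in> ?D" for z using \<beta> that by blast
  have "eval_formal E \<beta> (\<lambda>z. g z + h z) = (\<Oplus>\<^bsub>E\<^esub>z\<in>?D. add_pow E (g z + h z) (\<beta> z))"
    by (rule eval_formal_eq_finsum) (use D in auto)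
  also have "\<dots> = (\<Oplus>\<^bsub>E\<^esub>z\<in>?D. add_pow E (g z) (\<beta> z) \<oplus>\<^bsub>E\<^esub> add_pow E (h z) (\<beta> z))"
    by (rule E.finsum_cong'[OF refl]) (use \<beta>D E.add.int_pow_mult in auto)
  also have "\<dots> = eval_formal E \<beta> g \<oplus>\<^bsub>E\<^esub> eval_formal E \<beta> h"
    using \<beta>D eval_formal_eq_finsum[of ?D g] eval_formal_eq_finsum[of ?D h] D
    by (simp add: E.finsum_addf Pi_def)
  finally show ?thesis .
qed

lemma eval_formal_diff:
  assumes g: "g \<in> fsupp_on C" and h: "h \<in> fsupp_on C"
  shows "eval_formal E \<beta> (\<lambda>z. g z - h z) = eval_formal E \<beta> g \<ominus>\<^bsub>E\<^esub> eval_formal E \<beta> h"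
proof -
  have gh: "(\<lambda>z. g z - h z) \<in> fsupp_on C" by (rule fsupp_on_diff[OF g h])
  have "eval_formal E \<beta> g = eval_formal E \<beta> (\<lambda>z. (g z - h z) + h z)" by simp
  also have "\<dots> = eval_formal E \<beta> (\<lambda>z. g z - h z) \<oplus>\<^bsub>E\<^esub> eval_formal E \<beta> h" by (rule eval_formal_add[OF gh h])
  finally show ?thesis
    using eval_formal_closed[OF gh] eval_formal_closed[OF h] by (simp add: E.minus_eq E.add.m_assoc E.r_neg)
qed

lemma eval_formal_delta: "x \<in> C \<Longrightarrow> eval_formal E \<beta> (delta x) = \<beta> x"
proof -
  assume x: "x \<in> C"
  have "{z. delta x z \<noteq> 0} = {x}" by (auto simp: delta_def)
  then show ?thesis unfolding eval_formal_def using \<beta>[OF x] by (simp add: delta_def)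
qed

end

lemma tensor_relations_eval:
  assumes A: "module R A" and B: "module R B" and E: "abelian_group E" and H: "additive_subgroup H E"
    and \<beta>: "\<And>z. z \<in> carrier A \<times> carrier B \<Longrightarrow> \<beta> z \<in> carrier E"
    and add_left: "\<And>a a' b. a \<in> carrier A \<Longrightarrow> a' \<in> carrier A \<Longrightarrow> b \<in> carrier B \<Longrightarrow>
       \<beta> (a \<oplus>\<^bsub>A\<^esub> a', b) \<ominus>\<^bsub>E\<^esub> \<beta> (a, b) \<ominus>\<^bsub>E\<^esub> \<beta> (a', b) \<in> H"
    and add_right: "\<And>a b b'. a \<in> carrier A \<Longrightarrow> b \<in> carrier B \<Longrightarrow> b' \<in> carrier B \<Longrightarrow>
       \<beta> (a, b \<oplus>\<^bsub>B\<^esub> b') \<ominus>\<^bsub>E\<^esub> \<beta> (a, b) \<ominus>\<^bsub>E\<^esub> \<beta> (a, b') \<in> H"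
    and smult: "\<And>r a b. r \<in> carrier R \<Longrightarrow> a \<in> carrier A \<Longrightarrow> b \<in> carrier B \<Longrightarrow>
       \<beta> (r \<odot>\<^bsub>A\<^esub> a, b) \<ominus>\<^bsub>E\<^esub> \<beta> (a, r \<odot>\<^bsub>B\<^esub> b) \<in> H"
    and g: "g \<in> tensor_relations R A B"
  shows "eval_formal E \<beta> g \<in> H"
  using g
proof (induction g rule: zspan.induct)
  interpret A: module R A by (rule A)
  interpret B: module R B by (rule B)
  interpret E: abelian_group E by (rule E)
  interpret H: additive_subgroup H E by (rule H)
  have minus_closed: "x \<ominus>\<^bsub>E\<^esub> y \<in> H" if "x \<in> H" "y \<in> H" for x y
    using that by (simp add: a_minus_def)
  note eval = eval_formal_diff[OF E \<beta>] eval_formal_delta[OF E \<beta>] fsupp_on_diff fsupp_on_delta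
  have gens: "eval_formal E \<beta> s \<in> H" if "s \<in> tensor_gens R A B" for s
    using that by (cases rule: tensor_gensE) (auto simp: eval add_left add_right smult)
  have formal: "s \<in> tensor_gens R A B \<Longrightarrow> s \<in> formal_sums A B" for s
    using tensor_gens_formal_sums[OF A B] by blast
  {
    case zspan_zero
    show ?case unfolding eval_formal_def by simp
  next
    case (zspan_add s h)
    then show ?case
      using eval_formal_add[OF E \<beta> tensor_relations_formal_sums[OF A B zspan_add(2)] formal[OF zspan_add(1)]]
        gens[OF zspan_add(1)] by simp
  next
    case (zspan_diff s h)
    then show ?case
      using eval_formal_diff[OF E \<beta> tensor_relations_formal_sums[OF A B zspan_diff(2)] formal[OF zspan_diff(1)]]
        gens[OF zspan_diff(1)] minus_closed by simp
  }
qed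

lemma (in abelian_group) additive_subgroup_zero: "additive_subgroup {\<zero>} G"
  by (rule additive_subgroup.intro) (use add.triv_subgroup in simp)

lemma tensor_relations_eval_delta:
  assumes A: "module R A" and B: "module R B" and E: "abelian_group E" and H: "additive_subgroup H E"
    and \<beta>: "\<And>z. z \<in> carrier A \<times> carrier B \<Longrightarrow> \<beta> z \<in> carrier E"
    and add_left: "\<And>a a' b. a \<in> carrier A \<Longrightarrow> a' \<in> carrier A \<Longrightarrow> b \<in> carrier B \<Longrightarrow>
       \<beta> (a \<oplus>\<^bsub>A\<^esub> a', b) \<ominus>\<^bsub>E\<^esub> \<beta> (a, b) \<ominus>\<^bsub>E\<^esub> \<beta> (a', b) \<in> H"
    and add_right: "\<And>a b b'. a \<in> carrier A \<Longrightarrow> b \<in> carrier B \<Longrightarrow> b' \<in> carrier B \<Longrightarrow>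
       \<beta> (a, b \<oplus>\<^bsub>B\<^esub> b') \<ominus>\<^bsub>E\<^esub> \<beta> (a, b) \<ominus>\<^bsub>E\<^esub> \<beta> (a, b') \<in> H"
    and smult: "\<And>r a b. r \<in> carrier R \<Longrightarrow> a \<in> carrier A \<Longrightarrow> b \<in> carrier B \<Longrightarrow>
       \<beta> (r \<odot>\<^bsub>A\<^esub> a, b) \<ominus>\<^bsub>E\<^esub> \<beta> (a, r \<odot>\<^bsub>B\<^esub> b) \<in> H"
    and x: "x \<in> carrier A \<times> carrier B" and d: "delta x \<in> tensor_relations R A B"
  shows "\<beta> x \<in> H"
  using tensor_relations_eval[OF assms(1-8) d] eval_formal_delta[OF E \<beta> x] by simp

lemma (in abelian_group) add_minus_summands:
  assumes "x \<in> carrier G" "y \<in> carrier G"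
  shows "x \<oplus> y \<ominus> x \<ominus> y = \<zero>"
proof -
  have "x \<oplus> y \<ominus> x \<ominus> y = (x \<oplus> \<ominus> x) \<oplus> (y \<oplus> \<ominus> y)"
    using assms by (simp add: a_minus_def a_ac)
  then show ?thesis using assms by (simp add: r_neg)
qed

lemma bilinear_map_tensor_relations_delta:
  assumes A: "module R A" and B: "module R B" and E: "abelian_group E"
    and \<beta>: "\<And>z. z \<in> carrier A \<times> carrier B \<Longrightarrow> \<beta> z \<in> carrier E"
    and add_left: "\<And>a a' b. a \<in> carrier A \<Longrightarrow> a' \<in> carrier A \<Longrightarrow> b \<in> carrier B \<Longrightarrow>
       \<beta> (a \<oplus>\<^bsub>A\<^esub> a', b) = \<beta> (a, b) \<oplus>\<^bsub>E\<^esub> \<beta> (a', b)"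
    and add_right: "\<And>a b b'. a \<in> carrier A \<Longrightarrow> b \<in> carrier B \<Longrightarrow> b' \<in> carrier B \<Longrightarrow>
       \<beta> (a, b \<oplus>\<^bsub>B\<^esub> b') = \<beta> (a, b) \<oplus>\<^bsub>E\<^esub> \<beta> (a, b')"
    and smult: "\<And>r a b. r \<in> carrier R \<Longrightarrow> a \<in> carrier A \<Longrightarrow> b \<in> carrier B \<Longrightarrow>
       \<beta> (r \<odot>\<^bsub>A\<^esub> a, b) = \<beta> (a, r \<odot>\<^bsub>B\<^esub> b)"
    and x: "x \<in> carrier A \<times> carrier B" and d: "delta x \<in> tensor_relations R A B"
  shows "\<beta> x = \<zero>\<^bsub>E\<^esub>"
proof -
  interpret E: abelian_group E by (rule E)
  interpret A: module R A by (rule A)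
  interpret B: module R B by (rule B)
  have "\<beta> x \<in> {\<zero>\<^bsub>E\<^esub>}"
    by (rule tensor_relations_eval_delta[OF A B E E.additive_subgroup_zero \<beta> _ _ _ x d])
      (simp_all add: add_left add_right smult \<beta> E.add_minus_summands E.r_neg[simplified a_minus_def[symmetric]])
  then show ?thesis by simp
qed

context
  fixes R :: "('r,'c) ring_scheme" and A :: "('r,'a) module" and B :: "('r,'b) module"
    and A' :: "('r,'a2) module" and B' :: "('r,'b2) module" and u :: "'a \<Rightarrow> 'a2" and v :: "'b \<Rightarrow> 'b2"
  assumes A: "module R A" and B: "module R B"
    and u: "linear_map R A A' u" and v: "linear_map R B B' v"
begin

lemma push_tensor_relations:
  "g \<in> tensor_relations R A B \<Longrightarrow> push (\<lambda>(a,b). (u a, v b)) g \<in> tensor_relations R A' B'"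
proof (rule push_zspan[OF tensor_gens_formal_sums[OF A B]])
  fix s assume "s \<in> tensor_gens R A B"
  then show "push (\<lambda>(a,b). (u a, v b)) s \<in> tensor_relations R A' B'"
  proof (cases rule: tensor_gensE)
    case (add_left a a' b)
    then show ?thesis using tensor_relations_add_left[of "u a" A' "u a'" "v b" B' R] u v
      by (simp add: push_delta_diff3 linear_map_def)
  next
    case (add_right a b b')
    then show ?thesis using tensor_relations_add_right[of "u a" A' "v b" B' "v b'" R] u v
      by (simp add: push_delta_diff3 linear_map_def)
  next
    case (smult r a b)
    then show ?thesis using tensor_relations_smult[of r R "u a" A' "v b" B'] u v
      by (simp add: push_delta_diff linear_map_def)
  qed
qed

lemma push_formal_sums: "g \<in> formal_sums A B \<Longrightarrow> push (\<lambda>(a,b). (u a, v b)) g \<in> formal_sums A' B'"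
  by (rule push_fsupp_on) (use u v in \<open>auto simp: linear_map_def\<close>)

lemma tensor_map_class:
  assumes g: "g \<in> formal_sums A B"
  shows "tensor_map R A' B' u v (tensor_class R A B g) = tensor_class R A' B' (push (\<lambda>(a,b). (u a, v b)) g)"
proof -
  let ?p = "pick_rep (tensor_class R A B g)"
  have p: "?p \<in> formal_sums A B" by (rule pick_rep_tensor_class(1)[OF tensor_class_in_quotient[OF g]])
  have "push (\<lambda>(a,b). (u a, v b)) (\<lambda>z. ?p z - g z) \<in> tensor_relations R A' B'"
    by (rule push_tensor_relations[OF pick_rep_tensor_class_diff[OF g]])
  then have "(\<lambda>z. push (\<lambda>(a,b). (u a, v b)) ?p z - push (\<lambda>(a,b). (u a, v b)) g z) \<in> tensor_relations R A' B'"
    by (rule zspan_cong) (simp add: push_diff[OF fsupp_on_finite[OF p] fsupp_on_finite[OF g]])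
  then show ?thesis
    unfolding tensor_map_def by (simp add: tensor_class_eq_iff push_formal_sums p g)
qed

lemma tensor_relations_reflect:
  assumes inj: "inj_on (tensor_map R A' B' u v) (carrier (tensor R A B))"
    and g: "g \<in> formal_sums A B" and pg: "push (\<lambda>(a,b). (u a, v b)) g \<in> tensor_relations R A' B'"
  shows "g \<in> tensor_relations R A B"
proof -
  have "tensor_map R A' B' u v (tensor_class R A B g) = tensor_map R A' B' u v (tensor_class R A B (\<lambda>_. 0))"
    using pg g by (simp add: tensor_map_class push_zero tensor_class_eq_zero_iff push_formal_sums)
  then have "tensor_class R A B g = tensor_class R A B (\<lambda>_. 0)"
    by (rule inj_onD[OF inj]) (simp_all add: tensor_class_in_quotient g)
  then show ?thesis using g by (simp add: tensor_class_eq_zero_iff)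
qed

end

lemma tensor_relations_swap:
  assumes A: "module R A" and B: "module R B" and g: "g \<in> tensor_relations R A B"
  shows "push (\<lambda>(a,b). (b,a)) g \<in> tensor_relations R B A"
proof (rule push_zspan[OF tensor_gens_formal_sums[OF A B] _ g])
  fix s assume "s \<in> tensor_gens R A B"
  then show "push (\<lambda>(a,b). (b,a)) s \<in> tensor_relations R B A"
  proof (cases rule: tensor_gensE)
    case (add_left a a' b)
    then show ?thesis using tensor_relations_add_right[of b B a A a' R] by (simp add: push_delta_diff3)
  next
    case (add_right a b b')
    then show ?thesis using tensor_relations_add_left[of b B b' a A R] by (simp add: push_delta_diff3)
  next
    case (smult r a b)
    then show ?thesis using zspan_uminus_closed[OF tensor_relations_smult[of r R b B a A]]
      by (simp add: push_delta_diff)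
  qed
qed

section \<open>Torsion with respect to the powers of one element\<close>

definition power_torsion :: "('r,'c) ring_scheme \<Rightarrow> ('r,'m,'e) module_scheme \<Rightarrow> 'r \<Rightarrow> 'm set" where
  "power_torsion A E a = {x \<in> carrier E. \<exists>k::nat. (a [^]\<^bsub>A\<^esub> k) \<odot>\<^bsub>E\<^esub> x = \<zero>\<^bsub>E\<^esub>}"

context module
begin

lemma smult_left_commute:
  "a \<in> carrier R \<Longrightarrow> b \<in> carrier R \<Longrightarrow> x \<in> carrier M \<Longrightarrow> a \<odot>\<^bsub>M\<^esub> (b \<odot>\<^bsub>M\<^esub> x) = b \<odot>\<^bsub>M\<^esub> (a \<odot>\<^bsub>M\<^esub> x)"
  by (metis smult_assoc1 R.m_comm)

lemma smult_nat_pow_add: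
  "a \<in> carrier R \<Longrightarrow> m \<in> carrier M \<Longrightarrow> (a [^] (i + j :: nat)) \<odot>\<^bsub>M\<^esub> m = (a [^] i) \<odot>\<^bsub>M\<^esub> ((a [^] j) \<odot>\<^bsub>M\<^esub> m)"
  by (simp add: R.nat_pow_mult[symmetric] smult_assoc1)

lemma power_torsion_smult_closed:
  assumes a: "a \<in> carrier R" and r: "r \<in> carrier R" and x: "x \<in> power_torsion R M a"
  shows "r \<odot>\<^bsub>M\<^esub> x \<in> power_torsion R M a"
proof -
  obtain i :: nat where x: "x \<in> carrier M" "(a [^] i) \<odot>\<^bsub>M\<^esub> x = \<zero>\<^bsub>M\<^esub>"
    using x by (auto simp: power_torsion_def)
  have "(a [^] i) \<odot>\<^bsub>M\<^esub> (r \<odot>\<^bsub>M\<^esub> x) = r \<odot>\<^bsub>M\<^esub> ((a [^] i) \<odot>\<^bsub>M\<^esub> x)"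
    using a r x by (simp add: smult_left_commute)
  then show ?thesis using r x by (auto simp: power_torsion_def)
qed

lemma power_torsion_submodule:
  assumes a: "a \<in> carrier R"
  shows "submodule (power_torsion R M a) R M"
proof (rule submoduleI)
  show "power_torsion R M a \<subseteq> carrier M" by (auto simp: power_torsion_def)
  show "\<zero>\<^bsub>M\<^esub> \<in> power_torsion R M a" by (auto simp: power_torsion_def intro: exI[of _ 0])
  show "r \<odot>\<^bsub>M\<^esub> x \<in> power_torsion R M a" if "r \<in> carrier R" "x \<in> power_torsion R M a" for r x
    by (rule power_torsion_smult_closed[OF a that])
  show "\<ominus>\<^bsub>M\<^esub> x \<in> power_torsion R M a" if "x \<in> power_torsion R M a" for x
    using power_torsion_smult_closed[OF a R.a_inv_closed[OF R.one_closed] that] that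
    by (auto simp: power_torsion_def smult_l_minus)
next
  fix x y assume "x \<in> power_torsion R M a" "y \<in> power_torsion R M a"
  then obtain i j :: nat where x: "x \<in> carrier M" "(a [^] i) \<odot>\<^bsub>M\<^esub> x = \<zero>\<^bsub>M\<^esub>"
    and y: "y \<in> carrier M" "(a [^] j) \<odot>\<^bsub>M\<^esub> y = \<zero>\<^bsub>M\<^esub>" by (auto simp: power_torsion_def)
  have "(a [^] (j + i)) \<odot>\<^bsub>M\<^esub> x = \<zero>\<^bsub>M\<^esub>" "(a [^] (i + j)) \<odot>\<^bsub>M\<^esub> y = \<zero>\<^bsub>M\<^esub>"
    using smult_nat_pow_add[OF a x(1)] smult_nat_pow_add[OF a y(1)] x y a by simp_all
  then have "(a [^] (i + j)) \<odot>\<^bsub>M\<^esub> (x \<oplus>\<^bsub>M\<^esub> y) = \<zero>\<^bsub>M\<^esub>"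
    using x y a by (simp add: smult_r_distr add.commute)
  then show "x \<oplus>\<^bsub>M\<^esub> y \<in> power_torsion R M a" using x y by (auto simp: power_torsion_def)
qed

lemma power_torsion_saturated:
  assumes a: "a \<in> carrier R" and m: "m \<in> carrier M" and km: "(a [^] (k::nat)) \<odot>\<^bsub>M\<^esub> m \<in> power_torsion R M a"
  shows "m \<in> power_torsion R M a"
proof -
  obtain i :: nat where "(a [^] i) \<odot>\<^bsub>M\<^esub> ((a [^] k) \<odot>\<^bsub>M\<^esub> m) = \<zero>\<^bsub>M\<^esub>"
    using km by (auto simp: power_torsion_def)
  then have "(a [^] (i + k)) \<odot>\<^bsub>M\<^esub> m = \<zero>\<^bsub>M\<^esub>" using smult_nat_pow_add[OF a m] by simp
  then show ?thesis using m by (auto simp: power_torsion_def)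
qed

lemma power_torsion_common_exponent:
  assumes a: "a \<in> carrier R" and F: "finite F" "F \<subseteq> power_torsion R M a"
  shows "\<exists>K::nat. \<forall>x\<in>F. (a [^] K) \<odot>\<^bsub>M\<^esub> x = \<zero>\<^bsub>M\<^esub>"
  using F
proof (induction F rule: finite_induct)
  case empty then show ?case by simp
next
  case (insert y F)
  then obtain K :: nat where K: "\<forall>x\<in>F. (a [^] K) \<odot>\<^bsub>M\<^esub> x = \<zero>\<^bsub>M\<^esub>" by auto
  obtain k :: nat where y: "y \<in> carrier M" "(a [^] k) \<odot>\<^bsub>M\<^esub> y = \<zero>\<^bsub>M\<^esub>"
    using insert.prems by (auto simp: power_torsion_def)
  have "(a [^] (k + K)) \<odot>\<^bsub>M\<^esub> x = \<zero>\<^bsub>M\<^esub>" if "x \<in> F" for x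
    using K that insert.prems a smult_nat_pow_add[OF a, of x k K] by (auto simp: power_torsion_def)
  moreover have "(a [^] (k + K)) \<odot>\<^bsub>M\<^esub> y = \<zero>\<^bsub>M\<^esub>"
    using y a smult_nat_pow_add[OF a y(1), of K k] by (simp add: add.commute)
  ultimately show ?case by blast
qed

end

lemma Ann_loc_iff_power_torsion:
  assumes E: "module A E" and a: "a \<in> carrier A"
  shows "a \<in> Ann_loc A E \<longleftrightarrow> carrier E \<subseteq> power_torsion A E a"
proof -
  interpret E: module A E by (rule E)
  let ?r = "loc_rel A E a" and ?C = "carrier E \<times> (UNIV :: nat set)"
  have loc_rel_iff: "((x, m), (y, n)) \<in> ?r \<longleftrightarrow>
      x \<in> carrier E \<and> y \<in> carrier E \<and>
      (a [^]\<^bsub>A\<^esub> n) \<odot>\<^bsub>E\<^esub> x \<ominus>\<^bsub>E\<^esub> (a [^]\<^bsub>A\<^esub> m) \<odot>\<^bsub>E\<^esub> y \<in> power_torsion A E a" for x m y n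
    using a by (auto simp: loc_rel_def power_torsion_def)
  show ?thesis
  proof
    assume "a \<in> Ann_loc A E"
    then have lc: "loc_carrier A E a = {loc_zero A E a}" by (simp add: Ann_loc_def)
    show "carrier E \<subseteq> power_torsion A E a"
    proof
      fix x assume x: "x \<in> carrier E"
      have "?r `` {(x, 0)} \<in> loc_carrier A E a"
        unfolding loc_carrier_def by (rule quotientI) (use x in auto)
      then have "?r `` {(x, 0)} = ?r `` {(\<zero>\<^bsub>E\<^esub>, 0)}" using lc by (simp add: loc_zero_def)
      moreover have "((x, 0), (x, 0)) \<in> ?r"
        unfolding loc_rel_def using x by (auto intro!: exI[of _ 0] simp: E.r_neg E.minus_eq)
      ultimately have "((\<zero>\<^bsub>E\<^esub>, 0), (x, 0)) \<in> ?r" by blast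
      then have "\<ominus>\<^bsub>E\<^esub> x \<in> power_torsion A E a"
        unfolding loc_rel_iff using x by (simp add: E.minus_eq)
      then show "x \<in> power_torsion A E a"
        using E.submoduleE(3)[OF E.power_torsion_submodule[OF a]] x by fastforce
    qed
  next
    assume H: "carrier E \<subseteq> power_torsion A E a"
    have cl: "?r `` {p} = ?C" if p: "p \<in> ?C" for p
    proof -
      have "(p, q) \<in> ?r" if "q \<in> ?C" for q
        using p that H a by (cases p, cases q) (auto simp: loc_rel_iff)
      then show ?thesis unfolding loc_rel_def by auto
    qed
    have z: "(\<zero>\<^bsub>E\<^esub>, 0::nat) \<in> ?C" by simp
    have "loc_carrier A E a = {?C}"
    proof
      show "loc_carrier A E a \<subseteq> {?C}" unfolding loc_carrier_def using cl by (auto elim!: quotientE)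
      show "{?C} \<subseteq> loc_carrier A E a" unfolding loc_carrier_def using cl[OF z] quotientI[OF z, of ?r] by auto
    qed
    moreover have "loc_zero A E a = ?C" unfolding loc_zero_def using cl[OF z] .
    ultimately show "a \<in> Ann_loc A E" using a by (simp add: Ann_loc_def)
  qed
qed

section \<open>Base change\<close>

lemma carrier_restrict_scalars: "carrier (restrict_scalars f T) = carrier T"
  by (simp add: restrict_scalars_def)

lemma restrict_scalars_simps [simp]:
  "\<zero>\<^bsub>restrict_scalars f T\<^esub> = \<zero>\<^bsub>T\<^esub>"
  "x \<oplus>\<^bsub>restrict_scalars f T\<^esub> y = x \<oplus>\<^bsub>T\<^esub> y"
  "r \<odot>\<^bsub>restrict_scalars f T\<^esub> t = f r \<otimes>\<^bsub>T\<^esub> t"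
  by (simp_all add: restrict_scalars_def)

lemma base_change_simps [simp]:
  "carrier (base_change R T f M) = carrier (tensor R M (restrict_scalars f T))"
  "\<zero>\<^bsub>base_change R T f M\<^esub> = \<zero>\<^bsub>tensor R M (restrict_scalars f T)\<^esub>"
  by (simp_all add: base_change_def Let_def tensor_def)

lemma base_change_add:
  "U \<oplus>\<^bsub>base_change R T f M\<^esub> V = tensor_class R M (restrict_scalars f T) (\<lambda>z. pick_rep U z + pick_rep V z)"
  by (simp add: base_change_def Let_def tensor_def)

lemma base_change_smult:
  "s \<odot>\<^bsub>base_change R T f M\<^esub> U = tensor_map R M (restrict_scalars f T) id (\<lambda>t. s \<otimes>\<^bsub>T\<^esub> t) U"
  by (simp add: base_change_def Let_def tensor_map_def)

lemma module_restrict_scalars: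
  assumes R: "cring R" and T: "cring T" and f: "f \<in> ring_hom R T"
  shows "module R (restrict_scalars f T)"
proof -
  interpret R: cring R by (rule R)
  interpret T: cring T by (rule T)
  interpret f: ring_hom_cring R T f by (intro ring_hom_cringI R T f)
  have "abelian_group (restrict_scalars f T)"
    by (rule abelian_groupI) (auto simp: carrier_restrict_scalars T.a_ac intro: T.l_neg)
  then show ?thesis
    by (rule moduleI[OF R]) (auto simp: carrier_restrict_scalars T.m_assoc T.l_distr T.r_distr)
qed

lemma restrict_scalars_a_inv: "\<ominus>\<^bsub>restrict_scalars f T\<^esub> x = \<ominus>\<^bsub>T\<^esub> x"
  by (simp add: a_inv_def m_inv_def restrict_scalars_def)

lemma carrier_self_module: "carrier (self_module R) = carrier R"
  by (simp add: self_module_def)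

lemma self_module_simps [simp]:
  "\<zero>\<^bsub>self_module R\<^esub> = \<zero>\<^bsub>R\<^esub>"
  "x \<oplus>\<^bsub>self_module R\<^esub> y = x \<oplus>\<^bsub>R\<^esub> y"
  "r \<odot>\<^bsub>self_module R\<^esub> t = r \<otimes>\<^bsub>R\<^esub> t"
  by (simp_all add: self_module_def)

lemma module_self_module: "cring R \<Longrightarrow> module R (self_module R)"
proof -
  assume R: "cring R"
  interpret R: cring R by (rule R)
  have "abelian_group (self_module R)"
    by (rule abelian_groupI) (auto simp: carrier_self_module R.a_ac intro: R.l_neg)
  then show ?thesis
    by (rule moduleI[OF R]) (auto simp: carrier_self_module R.m_assoc R.l_distr R.r_distr)
qed

locale base_change_setting =
  fixes R :: "'r ring" and T :: "'t ring" and f :: "'r \<Rightarrow> 't" and M :: "('r,'m) module"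
  assumes R: "cring R" and T: "cring T" and f: "f \<in> ring_hom R T" and M: "module R M"

sublocale base_change_setting \<subseteq> R: cring R by (rule R)
sublocale base_change_setting \<subseteq> T: cring T by (rule T)
sublocale base_change_setting \<subseteq> M: module R M by (rule M)
sublocale base_change_setting \<subseteq> f: ring_hom_cring R T f by (intro ring_hom_cringI R T f)

context base_change_setting
begin

abbreviation (input) "T\<^sub>R \<equiv> restrict_scalars f T"
abbreviation (input) "N \<equiv> base_change R T f M"

lemma module_T\<^sub>R: "module R T\<^sub>R"
  by (rule module_restrict_scalars[OF R T f])

lemma base_change_smult_class:
  assumes s: "s \<in> carrier T" and g: "g \<in> formal_sums M T\<^sub>R"
  shows "s \<odot>\<^bsub>N\<^esub> tensor_class R M T\<^sub>R g = tensor_class R M T\<^sub>R (push (\<lambda>(m, t). (m, s \<otimes>\<^bsub>T\<^esub> t)) g)"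
proof -
  have id: "linear_map R M M id" unfolding linear_map_def by simp
  have s_mult: "linear_map R T\<^sub>R T\<^sub>R (\<lambda>t. s \<otimes>\<^bsub>T\<^esub> t)"
    unfolding linear_map_def using s by (auto simp: carrier_restrict_scalars T.r_distr T.m_lcomm)
  show ?thesis
    unfolding base_change_smult tensor_map_class[OF M module_T\<^sub>R id s_mult g] by simp
qed

lemma base_change_add_class:
  "g \<in> formal_sums M T\<^sub>R \<Longrightarrow> h \<in> formal_sums M T\<^sub>R \<Longrightarrow>
   tensor_class R M T\<^sub>R g \<oplus>\<^bsub>N\<^esub> tensor_class R M T\<^sub>R h = tensor_class R M T\<^sub>R (\<lambda>z. g z + h z)"
  by (simp add: base_change_add tensor_class_add)

lemma base_change_cases:
  "U \<in> carrier N \<Longrightarrow> (\<And>g. g \<in> formal_sums M T\<^sub>R \<Longrightarrow> U = tensor_class R M T\<^sub>R g \<Longrightarrow> P) \<Longrightarrow> P"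
  using pick_rep_tensor_class by (metis base_change_simps(1) tensor_simps(1))

lemma push_smult_formal_sums:
  "s \<in> carrier T \<Longrightarrow> g \<in> formal_sums M T\<^sub>R \<Longrightarrow> push (\<lambda>(m, t). (m, s \<otimes>\<^bsub>T\<^esub> t)) g \<in> formal_sums M T\<^sub>R"
  by (rule push_fsupp_on) (auto simp: carrier_restrict_scalars)

lemma abelian_group_base_change: "abelian_group N"
proof (rule abelian_groupI)
  fix x y assume "x \<in> carrier N" "y \<in> carrier N"
  then show "x \<oplus>\<^bsub>N\<^esub> y \<in> carrier N"
    by (elim base_change_cases) (simp add: base_change_add_class tensor_class_in_quotient fsupp_on_add)
next
  show "\<zero>\<^bsub>N\<^esub> \<in> carrier N" by (simp add: tensor_class_in_quotient)
next
  fix x y z assume "x \<in> carrier N" "y \<in> carrier N" "z \<in> carrier N"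
  then show "x \<oplus>\<^bsub>N\<^esub> y \<oplus>\<^bsub>N\<^esub> z = x \<oplus>\<^bsub>N\<^esub> (y \<oplus>\<^bsub>N\<^esub> z)"
    by (elim base_change_cases) (simp only: base_change_add_class fsupp_on_add add.assoc)
next
  fix x y assume "x \<in> carrier N" "y \<in> carrier N"
  then show "x \<oplus>\<^bsub>N\<^esub> y = y \<oplus>\<^bsub>N\<^esub> x"
    by (elim base_change_cases) (simp only: base_change_add_class add.commute)
next
  fix x assume "x \<in> carrier N"
  then show "\<zero>\<^bsub>N\<^esub> \<oplus>\<^bsub>N\<^esub> x = x"
    by (elim base_change_cases) (simp add: base_change_add_class)
next
  fix x assume "x \<in> carrier N"
  then show "\<exists>y\<in>carrier N. y \<oplus>\<^bsub>N\<^esub> x = \<zero>\<^bsub>N\<^esub>"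
  proof (elim base_change_cases)
    fix g assume g: "g \<in> formal_sums M T\<^sub>R" "x = tensor_class R M T\<^sub>R g"
    have "tensor_class R M T\<^sub>R (\<lambda>z. - g z) \<oplus>\<^bsub>N\<^esub> x = \<zero>\<^bsub>N\<^esub>"
      using base_change_add_class[OF fsupp_on_uminus[OF g(1)] g(1)] g(2) by simp
    then show ?thesis using tensor_class_in_quotient[OF fsupp_on_uminus[OF g(1)]] by auto
  qed
qed

lemma base_change_smult_add_scalars:
  assumes a: "a \<in> carrier T" and b: "b \<in> carrier T" and g: "g \<in> formal_sums M T\<^sub>R"
  shows "(a \<oplus>\<^bsub>T\<^esub> b) \<odot>\<^bsub>N\<^esub> tensor_class R M T\<^sub>R g
       = a \<odot>\<^bsub>N\<^esub> tensor_class R M T\<^sub>R g \<oplus>\<^bsub>N\<^esub> b \<odot>\<^bsub>N\<^esub> tensor_class R M T\<^sub>R g"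
proof -
  let ?\<phi> = "\<lambda>s (m, t). (m, s \<otimes>\<^bsub>T\<^esub> t)"
  let ?D = "{z. g z \<noteq> 0}"
  have D: "finite ?D" by (rule fsupp_on_finite[OF g])
  have "(\<lambda>y. \<Sum>z\<in>?D. g z * (delta (?\<phi> (a \<oplus>\<^bsub>T\<^esub> b) z) y - delta (?\<phi> a z) y - delta (?\<phi> b z) y))
      \<in> tensor_relations R M T\<^sub>R"
  proof (rule zspan_sum[OF D])
    fix z assume z: "z \<in> ?D"
    obtain m t where z_eq: "z = (m, t)" by fastforce
    have mt: "m \<in> carrier M" "t \<in> carrier T"
      using fsupp_on_subset[OF g] z z_eq by (auto simp: carrier_restrict_scalars)
    show "(\<lambda>y. g z * (delta (?\<phi> (a \<oplus>\<^bsub>T\<^esub> b) z) y - delta (?\<phi> a z) y - delta (?\<phi> b z) y))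
        \<in> tensor_relations R M T\<^sub>R"
      using zspan_int_smult[OF tensor_relations_add_right[of m M "a \<otimes>\<^bsub>T\<^esub> t" T\<^sub>R "b \<otimes>\<^bsub>T\<^esub> t" R], of "g z"]
        mt a b z_eq by (simp add: carrier_restrict_scalars T.l_distr)
  qed
  then have "(\<lambda>y. push (?\<phi> (a \<oplus>\<^bsub>T\<^esub> b)) g y - (push (?\<phi> a) g y + push (?\<phi> b) g y))
      \<in> tensor_relations R M T\<^sub>R"
    by (rule zspan_cong) (simp add: push_eq_sum_delta[OF D order_refl] algebra_simps sum_subtractf sum.distrib)
  then show ?thesis
    using a b g
    by (simp add: base_change_smult_class base_change_add_class push_smult_formal_sums
        tensor_class_eq_iff fsupp_on_add)
qed

lemma module_base_change: "module T N"
proof (rule moduleI[OF T abelian_group_base_change])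
  fix a x assume "a \<in> carrier T" "x \<in> carrier N"
  then show "a \<odot>\<^bsub>N\<^esub> x \<in> carrier N"
    by (elim base_change_cases) (simp add: base_change_smult_class tensor_class_in_quotient push_smult_formal_sums)
next
  fix a b x assume "a \<in> carrier T" "b \<in> carrier T" "x \<in> carrier N"
  then show "(a \<oplus>\<^bsub>T\<^esub> b) \<odot>\<^bsub>N\<^esub> x = a \<odot>\<^bsub>N\<^esub> x \<oplus>\<^bsub>N\<^esub> b \<odot>\<^bsub>N\<^esub> x"
    by (elim base_change_cases) (simp only: base_change_smult_add_scalars)
next
  fix a x y assume a: "a \<in> carrier T" and "x \<in> carrier N" "y \<in> carrier N"
  then show "a \<odot>\<^bsub>N\<^esub> (x \<oplus>\<^bsub>N\<^esub> y) = a \<odot>\<^bsub>N\<^esub> x \<oplus>\<^bsub>N\<^esub> a \<odot>\<^bsub>N\<^esub> y"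
  proof (elim base_change_cases)
    fix g h assume g: "g \<in> formal_sums M T\<^sub>R" "y = tensor_class R M T\<^sub>R g"
      and h: "h \<in> formal_sums M T\<^sub>R" "x = tensor_class R M T\<^sub>R h"
    have "push (\<lambda>(m, t). (m, a \<otimes>\<^bsub>T\<^esub> t)) (\<lambda>z. h z + g z)
        = (\<lambda>z. push (\<lambda>(m, t). (m, a \<otimes>\<^bsub>T\<^esub> t)) h z + push (\<lambda>(m, t). (m, a \<otimes>\<^bsub>T\<^esub> t)) g z)"
      by (rule ext, rule push_add[OF fsupp_on_finite[OF h(1)] fsupp_on_finite[OF g(1)]])
    then show ?thesis
      using g h a by (simp add: base_change_smult_class base_change_add_class push_smult_formal_sums fsupp_on_add)
  qed
next
  fix a b x assume a: "a \<in> carrier T" and b: "b \<in> carrier T" and "x \<in> carrier N"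
  then show "(a \<otimes>\<^bsub>T\<^esub> b) \<odot>\<^bsub>N\<^esub> x = a \<odot>\<^bsub>N\<^esub> (b \<odot>\<^bsub>N\<^esub> x)"
  proof (elim base_change_cases)
    fix g assume g: "g \<in> formal_sums M T\<^sub>R" "x = tensor_class R M T\<^sub>R g"
    have "push (\<lambda>(m, t). (m, a \<otimes>\<^bsub>T\<^esub> t)) (push (\<lambda>(m, t). (m, b \<otimes>\<^bsub>T\<^esub> t)) g)
        = push (\<lambda>(m, t). (m, (a \<otimes>\<^bsub>T\<^esub> b) \<otimes>\<^bsub>T\<^esub> t)) g"
      unfolding push_comp[OF fsupp_on_finite[OF g(1)]]
      by (rule push_cong) (use fsupp_on_subset[OF g(1)] a b in \<open>auto simp: carrier_restrict_scalars T.m_assoc\<close>)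
    then show ?thesis
      using g a b by (simp add: base_change_smult_class push_smult_formal_sums)
  qed
next
  fix x assume "x \<in> carrier N"
  then show "\<one>\<^bsub>T\<^esub> \<odot>\<^bsub>N\<^esub> x = x"
  proof (elim base_change_cases)
    fix g assume g: "g \<in> formal_sums M T\<^sub>R" "x = tensor_class R M T\<^sub>R g"
    have "push (\<lambda>(m, t). (m, \<one>\<^bsub>T\<^esub> \<otimes>\<^bsub>T\<^esub> t)) g = g"
      by (rule push_id[OF fsupp_on_finite[OF g(1)]]) (use fsupp_on_subset[OF g(1)] in \<open>auto simp: carrier_restrict_scalars\<close>)
    then show ?thesis using g by (simp add: base_change_smult_class)
  qed
qed

interpretation R: cring R by (rule R)
interpretation T: cring T by (rule T)
interpretation M: module R M by (rule M)
interpretation f: ring_hom_cring R T f by (intro ring_hom_cringI R T f)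

lemma base_change_power_torsion:
  assumes a: "a \<in> carrier R" and M_tor: "carrier M \<subseteq> power_torsion R M a"
  shows "carrier N \<subseteq> power_torsion T N (f a)"
proof
  fix U assume "U \<in> carrier N"
  then obtain g where g: "g \<in> formal_sums M T\<^sub>R" "U = tensor_class R M T\<^sub>R g"
    by (rule base_change_cases)
  let ?D = "{z. g z \<noteq> 0}"
  have D: "finite ?D" by (rule fsupp_on_finite[OF g(1)])
  have D_sub: "fst z \<in> carrier M \<and> snd z \<in> carrier T" if "z \<in> ?D" for z
    using fsupp_on_subset[OF g(1)] that by (auto simp: carrier_restrict_scalars mem_Times_iff)
  have "finite (fst ` ?D)" "fst ` ?D \<subseteq> power_torsion R M a" using D D_sub M_tor by auto
  then obtain K :: nat where K: "\<And>m. m \<in> fst ` ?D \<Longrightarrow> (a [^]\<^bsub>R\<^esub> K) \<odot>\<^bsub>M\<^esub> m = \<zero>\<^bsub>M\<^esub>"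
    using M.power_torsion_common_exponent[OF a] by meson
  let ?s = "f a [^]\<^bsub>T\<^esub> K"
  have s: "?s \<in> carrier T" "?s = f (a [^]\<^bsub>R\<^esub> K)" using a by simp_all
  have "(\<lambda>y. \<Sum>z\<in>?D. g z * delta ((\<lambda>(m, t). (m, ?s \<otimes>\<^bsub>T\<^esub> t)) z) y) \<in> tensor_relations R M T\<^sub>R"
  proof (rule zspan_sum[OF D])
    fix z assume z: "z \<in> ?D"
    obtain m t where z_eq: "z = (m, t)" by fastforce
    have "m \<in> fst ` ?D" using imageI[OF z, of fst] z_eq by simp
    then have Km: "(a [^]\<^bsub>R\<^esub> K) \<odot>\<^bsub>M\<^esub> m = \<zero>\<^bsub>M\<^esub>" by (rule K)
    have mt: "m \<in> carrier M" "t \<in> carrier T\<^sub>R"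
      using D_sub[OF z] z_eq by (auto simp: carrier_restrict_scalars)
    have "delta (m, (a [^]\<^bsub>R\<^esub> K) \<odot>\<^bsub>T\<^sub>R\<^esub> t) \<in> tensor_relations R M T\<^sub>R"
      by (rule tensor_relations_annihilated[OF M R.nat_pow_closed[OF a] mt Km])
    then have "delta ((\<lambda>(m, t). (m, ?s \<otimes>\<^bsub>T\<^esub> t)) z) \<in> tensor_relations R M T\<^sub>R"
      using s(2) z_eq by simp
    then show "(\<lambda>y. g z * delta ((\<lambda>(m, t). (m, ?s \<otimes>\<^bsub>T\<^esub> t)) z) y) \<in> tensor_relations R M T\<^sub>R"
      by (rule zspan_int_smult)
  qed
  then have "push (\<lambda>(m, t). (m, ?s \<otimes>\<^bsub>T\<^esub> t)) g \<in> tensor_relations R M T\<^sub>R"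
    by (rule zspan_cong) (simp add: push_eq_sum_delta[OF D order_refl])
  then have "?s \<odot>\<^bsub>N\<^esub> U = \<zero>\<^bsub>N\<^esub>"
    using g s by (simp add: base_change_smult_class tensor_class_eq_zero_iff
        push_smult_formal_sums)
  then show "U \<in> power_torsion T N (f a)"
    using \<open>U \<in> carrier N\<close> by (auto simp: power_torsion_def)
qed

lemma Ann_loc_subset_base_change: "Ann_loc R M \<subseteq> {a \<in> carrier R. f a \<in> Ann_loc T N}"
proof
  fix a assume a_Ann: "a \<in> Ann_loc R M"
  then have a: "a \<in> carrier R" by (simp add: Ann_loc_def)
  have "f a \<in> Ann_loc T N"
    using base_change_power_torsion[OF a] a_Ann a
    by (simp add: Ann_loc_iff_power_torsion[OF M a] Ann_loc_iff_power_torsion[OF module_base_change])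
  with a show "a \<in> {a \<in> carrier R. f a \<in> Ann_loc T N}" by simp
qed

lemma base_change_pure_tensor_torsion:
  assumes a: "a \<in> carrier R" and fa: "f a \<in> Ann_loc T N" and m: "m \<in> carrier M" and t: "t \<in> carrier T"
  shows "\<exists>k::nat. delta (m, f (a [^]\<^bsub>R\<^esub> k) \<otimes>\<^bsub>T\<^esub> t) \<in> tensor_relations R M T\<^sub>R"
proof -
  have d: "delta (m, t) \<in> formal_sums M T\<^sub>R" by (rule fsupp_on_delta) (simp add: m t carrier_restrict_scalars)
  then have "tensor_class R M T\<^sub>R (delta (m, t)) \<in> power_torsion T N (f a)"
    using fa Ann_loc_iff_power_torsion[OF module_base_change] a
    by (auto simp: tensor_class_in_quotient)
  then obtain k :: nat where "(f a [^]\<^bsub>T\<^esub> k) \<odot>\<^bsub>N\<^esub> tensor_class R M T\<^sub>R (delta (m, t)) = \<zero>\<^bsub>N\<^esub>"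
    by (auto simp: power_torsion_def)
  then have "push (\<lambda>(m, t). (m, f a [^]\<^bsub>T\<^esub> k \<otimes>\<^bsub>T\<^esub> t)) (delta (m, t)) \<in> tensor_relations R M T\<^sub>R"
    using a d by (simp add: base_change_smult_class tensor_class_eq_zero_iff
        push_smult_formal_sums)
  then show ?thesis using a by (auto simp: push_delta)
qed

lemma Ann_loc_of_base_change:
  assumes unit_tensor: "\<And>x. x \<in> carrier M \<Longrightarrow> delta (x, \<one>\<^bsub>T\<^esub>) \<in> tensor_relations R M T\<^sub>R \<Longrightarrow> x = \<zero>\<^bsub>M\<^esub>"
    and a: "a \<in> carrier R" and fa: "f a \<in> Ann_loc T N"
  shows "a \<in> Ann_loc R M"
  unfolding Ann_loc_iff_power_torsion[OF M a]
proof
  fix x assume x: "x \<in> carrier M"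
  obtain k :: nat where k: "delta (x, f (a [^]\<^bsub>R\<^esub> k) \<otimes>\<^bsub>T\<^esub> \<one>\<^bsub>T\<^esub>) \<in> tensor_relations R M T\<^sub>R"
    using base_change_pure_tensor_torsion[OF a fa x T.one_closed] by blast
  have ak: "a [^]\<^bsub>R\<^esub> k \<in> carrier R" using a by simp
  have "(\<lambda>z. delta (x, f (a [^]\<^bsub>R\<^esub> k) \<otimes>\<^bsub>T\<^esub> \<one>\<^bsub>T\<^esub>) z
        + (delta ((a [^]\<^bsub>R\<^esub> k) \<odot>\<^bsub>M\<^esub> x, \<one>\<^bsub>T\<^esub>) z - delta (x, (a [^]\<^bsub>R\<^esub> k) \<odot>\<^bsub>T\<^sub>R\<^esub> \<one>\<^bsub>T\<^esub>) z))
      \<in> tensor_relations R M T\<^sub>R"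
    by (rule zspan_add_closed[OF tensor_relations_smult k]) (use ak x in \<open>auto simp: carrier_restrict_scalars\<close>)
  then have "delta ((a [^]\<^bsub>R\<^esub> k) \<odot>\<^bsub>M\<^esub> x, \<one>\<^bsub>T\<^esub>) \<in> tensor_relations R M T\<^sub>R"
    by (rule zspan_cong) simp
  then have "(a [^]\<^bsub>R\<^esub> k) \<odot>\<^bsub>M\<^esub> x = \<zero>\<^bsub>M\<^esub>" using unit_tensor ak x by simp
  then show "x \<in> power_torsion R M a" using x by (auto simp: power_torsion_def)
qed

lemma pure_ext_unit_tensor:
  assumes pure: "pure_ext TYPE('m) R T f" and x: "x \<in> carrier M"
    and d: "delta (x, \<one>\<^bsub>T\<^esub>) \<in> tensor_relations R M T\<^sub>R"
  shows "x = \<zero>\<^bsub>M\<^esub>"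
proof -
  let ?S = "self_module R"
  have S: "module R ?S" by (rule module_self_module[OF R])
  have inj: "inj_on (tensor_map R M T\<^sub>R id f) (carrier (tensor R M ?S))"
    using pure M unfolding pure_ext_def by blast
  have id: "linear_map R M M id" unfolding linear_map_def by simp
  have f_lin: "linear_map R ?S T\<^sub>R f"
    unfolding linear_map_def by (auto simp: carrier_self_module carrier_restrict_scalars)
  have "delta (x, \<one>\<^bsub>R\<^esub>) \<in> tensor_relations R M ?S"
    by (rule tensor_relations_reflect[OF M S id f_lin inj]) (use x d in \<open>simp_all add: fsupp_on_delta carrier_self_module push_delta\<close>)
  then have "(\<lambda>(m, r). r \<odot>\<^bsub>M\<^esub> m) (x, \<one>\<^bsub>R\<^esub>) = \<zero>\<^bsub>M\<^esub>"
    by (intro bilinear_map_tensor_relations_delta[OF M S M.abelian_group_axioms])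
      (use x in \<open>auto simp: carrier_self_module M.smult_l_distr M.smult_r_distr M.smult_assoc1 M.smult_left_commute\<close>)
  then show ?thesis using x by simp
qed

lemma submodule_image: "submodule (f ` carrier R) R T\<^sub>R"
proof (rule module.submoduleI[OF module_T\<^sub>R])
  show "f ` carrier R \<subseteq> carrier T\<^sub>R" by (auto simp: carrier_restrict_scalars)
  show "\<zero>\<^bsub>T\<^sub>R\<^esub> \<in> f ` carrier R" using imageI[OF R.zero_closed, of f] by simp
next
  fix y assume "y \<in> f ` carrier R"
  then obtain r where r: "r \<in> carrier R" "y = f r" by blast
  have "\<ominus>\<^bsub>T\<^sub>R\<^esub> y = f (\<ominus>\<^bsub>R\<^esub> r)"
    using r by (simp add: restrict_scalars_a_inv f.hom_a_inv)
  then show "\<ominus>\<^bsub>T\<^sub>R\<^esub> y \<in> f ` carrier R" using imageI[OF R.a_inv_closed[OF r(1)], of f] by simp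
next
  fix y z assume "y \<in> f ` carrier R" "z \<in> f ` carrier R"
  then obtain r s where "r \<in> carrier R" "s \<in> carrier R" "y = f r" "z = f s" by blast
  then show "y \<oplus>\<^bsub>T\<^sub>R\<^esub> z \<in> f ` carrier R"
    by (metis R.add.m_closed f.hom_add image_eqI restrict_scalars_simps(2))
next
  fix r y assume "r \<in> carrier R" "y \<in> f ` carrier R"
  then obtain s where "s \<in> carrier R" "y = f s" by blast
  with \<open>r \<in> carrier R\<close> show "r \<odot>\<^bsub>T\<^sub>R\<^esub> y \<in> f ` carrier R"
    by (metis R.m_closed f.hom_mult image_eqI restrict_scalars_simps(3))
qed

definition image_module :: "('r,'t) module" where
  "image_module = T\<^sub>R\<lparr>carrier := f ` carrier R\<rparr>"

lemma image_module_simps: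
  "carrier image_module = f ` carrier R"
  "p \<oplus>\<^bsub>image_module\<^esub> p' = p \<oplus>\<^bsub>T\<^esub> p'"
  "s \<odot>\<^bsub>image_module\<^esub> p = f s \<otimes>\<^bsub>T\<^esub> p"
  by (simp_all add: image_module_def)

lemma module_image_module: "module R image_module"
  unfolding image_module_def by (rule submodule.submodule_is_module[OF submodule_image module_T\<^sub>R])

lemma image_module_tensor_relations_delta:
  assumes inj: "inj_on f (carrier R)" and r: "r \<in> carrier R" and x: "x \<in> carrier M"
    and d: "delta (f r, x) \<in> tensor_relations R image_module M"
  shows "r \<odot>\<^bsub>M\<^esub> x = \<zero>\<^bsub>M\<^esub>"
proof -
  let ?g = "inv_into (carrier R) f"
  have g: "?g (f r) = r" if "r \<in> carrier R" for r using inj that by simp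
  have g_closed: "?g p \<in> carrier R" if "p \<in> carrier image_module" for p
    using that unfolding image_module_simps by (auto intro: inv_into_into)
  have "(\<lambda>(p, m). ?g p \<odot>\<^bsub>M\<^esub> m) (f r, x) = \<zero>\<^bsub>M\<^esub>"
  proof (rule bilinear_map_tensor_relations_delta[OF module_image_module M M.abelian_group_axioms _ _ _ _ _ d])
    show "(\<lambda>(p, m). ?g p \<odot>\<^bsub>M\<^esub> m) z \<in> carrier M" if "z \<in> carrier image_module \<times> carrier M" for z
      using that g_closed by auto
    show "(f r, x) \<in> carrier image_module \<times> carrier M" using r x by (simp add: image_module_simps)
  next
    fix p p' m assume p: "p \<in> carrier image_module" and p': "p' \<in> carrier image_module" and m: "m \<in> carrier M"
    obtain s where s: "s \<in> carrier R" "p = f s" using p unfolding image_module_simps by blast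
    obtain s' where s': "s' \<in> carrier R" "p' = f s'" using p' unfolding image_module_simps by blast
    have "?g (p \<oplus>\<^bsub>image_module\<^esub> p') = s \<oplus>\<^bsub>R\<^esub> s'"
      using s s' g[of "s \<oplus>\<^bsub>R\<^esub> s'"] unfolding image_module_simps by simp
    then show "(\<lambda>(p, m). ?g p \<odot>\<^bsub>M\<^esub> m) (p \<oplus>\<^bsub>image_module\<^esub> p', m)
        = (\<lambda>(p, m). ?g p \<odot>\<^bsub>M\<^esub> m) (p, m) \<oplus>\<^bsub>M\<^esub> (\<lambda>(p, m). ?g p \<odot>\<^bsub>M\<^esub> m) (p', m)"
      using s s' m g by (simp add: M.smult_l_distr)
  next
    fix p m m' assume "p \<in> carrier image_module" "m \<in> carrier M" "m' \<in> carrier M"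
    then show "(\<lambda>(p, m). ?g p \<odot>\<^bsub>M\<^esub> m) (p, m \<oplus>\<^bsub>M\<^esub> m')
        = (\<lambda>(p, m). ?g p \<odot>\<^bsub>M\<^esub> m) (p, m) \<oplus>\<^bsub>M\<^esub> (\<lambda>(p, m). ?g p \<odot>\<^bsub>M\<^esub> m) (p, m')"
      using g_closed by (simp add: M.smult_r_distr)
  next
    fix t p m assume t: "t \<in> carrier R" and p: "p \<in> carrier image_module" and m: "m \<in> carrier M"
    obtain s where s: "s \<in> carrier R" "p = f s" using p unfolding image_module_simps by blast
    have "?g (t \<odot>\<^bsub>image_module\<^esub> p) = t \<otimes>\<^bsub>R\<^esub> s"
      using s t g[of "t \<otimes>\<^bsub>R\<^esub> s"] unfolding image_module_simps by simp
    then show "(\<lambda>(p, m). ?g p \<odot>\<^bsub>M\<^esub> m) (t \<odot>\<^bsub>image_module\<^esub> p, m)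
        = (\<lambda>(p, m). ?g p \<odot>\<^bsub>M\<^esub> m) (p, t \<odot>\<^bsub>M\<^esub> m)"
      using s t m g by (simp add: M.smult_assoc1 M.smult_left_commute)
  qed
  then show ?thesis using g[OF r] by simp
qed

lemma flat_unit_tensor:
  assumes flat: "flat TYPE('t) R M" and inj: "inj_on f (carrier R)" and x: "x \<in> carrier M"
    and d: "delta (x, \<one>\<^bsub>T\<^esub>) \<in> tensor_relations R M T\<^sub>R"
  shows "x = \<zero>\<^bsub>M\<^esub>"
proof -
  have incl: "linear_map R image_module T\<^sub>R id"
    unfolding linear_map_def image_module_simps by (auto simp: carrier_restrict_scalars)
  then have inj_incl: "inj_on (tensor_map R T\<^sub>R M id id) (carrier (tensor R image_module M))"
    using flat[unfolded flat_def, rule_format, of image_module T\<^sub>R id] module_image_module module_T\<^sub>R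
    by simp
  have id: "linear_map R M M id" unfolding linear_map_def by simp
  have one: "f \<one>\<^bsub>R\<^esub> \<in> carrier image_module" unfolding image_module_simps by (rule imageI) simp
  have "delta (f \<one>\<^bsub>R\<^esub>, x) \<in> tensor_relations R image_module M"
    by (rule tensor_relations_reflect[OF module_image_module M incl id inj_incl])
      (use tensor_relations_swap[OF M module_T\<^sub>R d] one x in \<open>simp_all add: fsupp_on_delta push_delta\<close>)
  then show ?thesis using image_module_tensor_relations_delta[OF inj R.one_closed x] x by simp
qed

end

section \<open>Determinants\<close>

definition remove_nth :: "nat \<Rightarrow> 'x list \<Rightarrow> 'x list" where
  "remove_nth p xs = take p xs @ drop (Suc p) xs"

definition swap_adj :: "nat \<Rightarrow> 'x list \<Rightarrow> 'x list" where
  "swap_adj i xs = xs[i := xs ! Suc i, Suc i := xs ! i]"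

fun move_right :: "nat \<Rightarrow> nat \<Rightarrow> 'x list \<Rightarrow> 'x list" where
  "move_right i 0 xs = xs"
| "move_right i (Suc m) xs = swap_adj (i + m) (move_right i m xs)"

lemma length_remove_nth[simp]: "p < length xs \<Longrightarrow> length (remove_nth p xs) = length xs - 1"
  by (simp add: remove_nth_def)

lemma nth_remove_nth:
  "p < length xs \<Longrightarrow> q < length xs - 1 \<Longrightarrow> remove_nth p xs ! q = (if q < p then xs ! q else xs ! Suc q)"
  by (cases "q < p") (simp_all add: remove_nth_def nth_append)

lemma set_remove_nth_subset: "set (remove_nth p xs) \<subseteq> set xs"
  unfolding remove_nth_def by (auto dest: in_set_takeD in_set_dropD)

lemma distinct_remove_nth: "distinct xs \<Longrightarrow> p < length xs \<Longrightarrow> distinct (remove_nth p xs)"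
proof -
  assume d: "distinct xs" and p: "p < length xs"
  have "distinct (take p xs @ xs ! p # drop (Suc p) xs)" using d id_take_nth_drop[OF p] by simp
  then show ?thesis unfolding remove_nth_def by simp
qed

lemma nth_notin_remove_nth: "distinct xs \<Longrightarrow> p < length xs \<Longrightarrow> xs ! p \<notin> set (remove_nth p xs)"
proof -
  assume d: "distinct xs" and p: "p < length xs"
  have "distinct (take p xs @ xs ! p # drop (Suc p) xs)" using d id_take_nth_drop[OF p] by simp
  then show ?thesis unfolding remove_nth_def by simp
qed

lemma in_set_remove_nth: "l \<in> set xs \<Longrightarrow> l \<noteq> xs ! p \<Longrightarrow> p < length xs \<Longrightarrow> l \<in> set (remove_nth p xs)"
proof -
  assume l: "l \<in> set xs" "l \<noteq> xs ! p" and p: "p < length xs"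
  have "set xs = set (take p xs) \<union> insert (xs ! p) (set (drop (Suc p) xs))"
    using arg_cong[OF id_take_nth_drop[OF p], of set] by simp
  then show ?thesis using l unfolding remove_nth_def by auto
qed

lemma length_swap_adj[simp]: "length (swap_adj i xs) = length xs"
  by (simp add: swap_adj_def)

lemma nth_swap_adj: "Suc i < length xs \<Longrightarrow> q < length xs \<Longrightarrow>
  swap_adj i xs ! q = (if q = i then xs ! Suc i else if q = Suc i then xs ! i else xs ! q)"
  by (auto simp: swap_adj_def nth_list_update)

lemma length_move_right[simp]: "length (move_right i m xs) = length xs"
  by (induction m) auto

lemma nth_move_right: "i + m < length xs \<Longrightarrow> q < length xs \<Longrightarrow>
  move_right i m xs ! q = (if q < i \<or> q > i + m then xs ! q else if q = i + m then xs ! i else xs ! Suc q)"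
proof (induction m arbitrary: q)
  case 0 then show ?case by auto
next
  case (Suc m)
  have "move_right i (Suc m) xs ! q = swap_adj (i + m) (move_right i m xs) ! q" by simp
  also have "\<dots> = (if q = i + m then move_right i m xs ! Suc (i + m) else if q = Suc (i + m) then move_right i m xs ! (i + m) else move_right i m xs ! q)"
    using Suc.prems by (simp add: nth_swap_adj)
  also have "\<dots> = (if q < i \<or> q > i + Suc m then xs ! q else if q = i + Suc m then xs ! i else xs ! Suc q)"
    using Suc.prems Suc.IH by auto
  finally show ?case .
qed

lemma remove_nth_swap_adj_less:
  "p < i \<Longrightarrow> Suc i < length xs \<Longrightarrow> remove_nth p (swap_adj i xs) = swap_adj (i - 1) (remove_nth p xs)"
  by (rule nth_equalityI) (auto simp: nth_remove_nth nth_swap_adj less_Suc_eq)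

lemma remove_nth_swap_adj_greater:
  "Suc i < p \<Longrightarrow> p < length xs \<Longrightarrow> remove_nth p (swap_adj i xs) = swap_adj i (remove_nth p xs)"
  by (rule nth_equalityI) (auto simp: nth_remove_nth nth_swap_adj less_Suc_eq)

lemma remove_nth_swap_adj_self:
  "Suc i < length xs \<Longrightarrow> remove_nth i (swap_adj i xs) = remove_nth (Suc i) xs"
  by (rule nth_equalityI) (auto simp: nth_remove_nth nth_swap_adj less_Suc_eq)

lemma remove_nth_swap_adj_Suc:
  "Suc i < length xs \<Longrightarrow> remove_nth (Suc i) (swap_adj i xs) = remove_nth i xs"
  by (rule nth_equalityI) (auto simp: nth_remove_nth nth_swap_adj less_Suc_eq)

lemma remove_nth_eq_move_right:
  "i < j \<Longrightarrow> j < length xs \<Longrightarrow> xs ! i = xs ! j \<Longrightarrow>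
   remove_nth i xs = move_right i (j - Suc i) (remove_nth j xs)"
  by (rule nth_equalityI) (auto simp: nth_remove_nth nth_move_right)

lemma set_swap_adj_subset: "Suc i < length xs \<Longrightarrow> set (swap_adj i xs) \<subseteq> set xs"
proof
  fix x assume i: "Suc i < length xs" and "x \<in> set (swap_adj i xs)"
  then obtain q where q: "q < length xs" "swap_adj i xs ! q = x" by (auto simp: in_set_conv_nth)
  then show "x \<in> set xs" using i by (auto simp: nth_swap_adj split: if_splits)
qed

lemma set_move_right_subset: "i + m < length xs \<Longrightarrow> set (move_right i m xs) \<subseteq> set xs"
proof (induction m)
  case 0 then show ?case by simp
next
  case (Suc m)
  then have "set (swap_adj (i + m) (move_right i m xs)) \<subseteq> set (move_right i m xs)" by (intro set_swap_adj_subset) simp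
  then show ?case using Suc by auto
qed

definition signed :: "('a,'b) ring_scheme \<Rightarrow> nat \<Rightarrow> 'a \<Rightarrow> 'a" where
  "signed K p x = (if even p then x else \<ominus>\<^bsub>K\<^esub> x)"

text \<open>\<open>minor K ws cs\<close> is the determinant of the square matrix with rows \<open>ws\<close> and columns \<open>cs\<close>,
  expanded along the first row; rows are functions of the column label, so the same rows have
  minors for every choice of columns.\<close>

fun minor :: "('a,'b) ring_scheme \<Rightarrow> ('l \<Rightarrow> 'a) list \<Rightarrow> 'l list \<Rightarrow> 'a" where
  "minor K [] cs = \<one>\<^bsub>K\<^esub>"
| "minor K (w # ws) cs = finsum K (\<lambda>p. signed K p (w (cs ! p) \<otimes>\<^bsub>K\<^esub> minor K ws (remove_nth p cs))) {..<length cs}"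

definition entries_in :: "('a,'b) ring_scheme \<Rightarrow> ('l \<Rightarrow> 'a) list \<Rightarrow> 'l list \<Rightarrow> bool" where
  "entries_in K ws cs \<longleftrightarrow> (\<forall>w\<in>set ws. \<forall>l\<in>set cs. w l \<in> carrier K)"

lemma entries_in_Cons:
  "entries_in K (w # ws) cs \<longleftrightarrow> (\<forall>l\<in>set cs. w l \<in> carrier K) \<and> entries_in K ws cs"
  by (auto simp: entries_in_def)

lemma entries_in_subset: "entries_in K ws cs \<Longrightarrow> set cs' \<subseteq> set cs \<Longrightarrow> entries_in K ws cs'"
  by (auto simp: entries_in_def)

lemma entries_in_remove_nth: "entries_in K ws cs \<Longrightarrow> entries_in K ws (remove_nth p cs)"
  using entries_in_subset set_remove_nth_subset by metis

context cring
begin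

lemma signed_closed[simp]: "x \<in> carrier R \<Longrightarrow> signed R p x \<in> carrier R"
  by (simp add: signed_def)

lemma signed_0[simp]: "signed R 0 x = x"
  by (simp add: signed_def)

lemma signed_Suc: "x \<in> carrier R \<Longrightarrow> signed R (Suc p) x = \<ominus> signed R p x"
  by (simp add: signed_def minus_minus)

lemma signed_mult: "a \<in> carrier R \<Longrightarrow> x \<in> carrier R \<Longrightarrow> signed R p (a \<otimes> x) = a \<otimes> signed R p x"
  by (simp add: signed_def r_minus)

lemma signed_add: "x \<in> carrier R \<Longrightarrow> y \<in> carrier R \<Longrightarrow> signed R p (x \<oplus> y) = signed R p x \<oplus> signed R p y"
  by (simp add: signed_def minus_add)

lemma signed_zero[simp]: "signed R p \<zero> = \<zero>"
  by (simp add: signed_def)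

lemma signed_a_inv: "x \<in> carrier R \<Longrightarrow> signed R p (\<ominus> x) = \<ominus> signed R p x"
  by (simp add: signed_def)

lemma signed_signed: "x \<in> carrier R \<Longrightarrow> signed R p (signed R q x) = signed R (p + q) x"
  by (simp add: signed_def minus_minus)

lemma finsum_a_inv: "finite A \<Longrightarrow> f \<in> A \<rightarrow> carrier R \<Longrightarrow> finsum R (\<lambda>p. \<ominus> f p) A = \<ominus> finsum R f A"
proof (induction A rule: finite_induct)
  case empty then show ?case by simp
next
  case (insert x F)
  then show ?case by (simp add: Pi_def minus_add finsum_insert)
qed

lemma finsum_cancel_pair:
  assumes A: "finite A" "i \<in> A" "j \<in> A" "i \<noteq> j" and F: "F \<in> A \<rightarrow> carrier R"
    and others: "\<And>p. p \<in> A \<Longrightarrow> p \<noteq> i \<Longrightarrow> p \<noteq> j \<Longrightarrow> F p = \<zero>" and ij: "F i = \<ominus> F j"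
  shows "finsum R F A = \<zero>"
proof -
  have A_eq: "A = insert i (insert j (A - {i, j}))" using A by auto
  have rest: "finsum R F (A - {i, j}) = \<zero>" by (rule add.finprod_one_eqI) (use others in auto)
  have "finsum R F A = F i \<oplus> (F j \<oplus> finsum R F (A - {i, j}))"
    using A F by (subst A_eq) (simp add: finsum_insert Pi_def)
  then show ?thesis using rest ij F A by (simp add: Pi_def l_neg)
qed

lemma minor_closed: "entries_in R ws cs \<Longrightarrow> minor R ws cs \<in> carrier R"
proof (induction ws arbitrary: cs)
  case Nil then show ?case by simp
next
  case (Cons w ws)
  have "\<And>p. p < length cs \<Longrightarrow> w (cs ! p) \<in> carrier R" using Cons.prems by (auto simp: entries_in_Cons)
  moreover have "\<And>p. minor R ws (remove_nth p cs) \<in> carrier R"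
    using Cons.IH entries_in_remove_nth[of R ws cs] Cons.prems by (simp add: entries_in_Cons)
  ultimately show ?case by (auto intro!: finsum_closed)
qed

lemma minor_term_closed:
  "entries_in R (w # ws) cs \<Longrightarrow> p < length cs \<Longrightarrow>
   signed R p (w (cs ! p) \<otimes> minor R ws (remove_nth p cs)) \<in> carrier R"
  using minor_closed[of ws "remove_nth p cs"] entries_in_remove_nth[of R ws cs p] by (auto simp: entries_in_Cons)

lemma minor_Cons_linear:
  assumes ws: "entries_in R ws cs" and x: "x \<in> carrier R" and y: "y \<in> carrier R"
    and u: "\<forall>l\<in>set cs. u l \<in> carrier R" and v: "\<forall>l\<in>set cs. v l \<in> carrier R"
    and w: "\<forall>l\<in>set cs. w l = x \<otimes> u l \<oplus> y \<otimes> v l"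
  shows "minor R (w # ws) cs = x \<otimes> minor R (u # ws) cs \<oplus> y \<otimes> minor R (v # ws) cs"
proof -
  let ?D = "\<lambda>p. minor R ws (remove_nth p cs)"
  let ?U = "\<lambda>p. signed R p (u (cs ! p) \<otimes> ?D p)" and ?V = "\<lambda>p. signed R p (v (cs ! p) \<otimes> ?D p)"
  have D: "?D p \<in> carrier R" for p by (rule minor_closed[OF entries_in_remove_nth[OF ws]])
  have uv: "u (cs ! p) \<in> carrier R" "v (cs ! p) \<in> carrier R" if "p < length cs" for p
    using u v that by auto
  have "minor R (w # ws) cs = (\<Oplus>p\<in>{..<length cs}. x \<otimes> ?U p \<oplus> y \<otimes> ?V p)"
    unfolding minor.simps
    by (rule finsum_cong'[OF refl]) (use w x y uv D in \<open>auto simp: l_distr m_assoc signed_add signed_mult\<close>)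
  also have "\<dots> = x \<otimes> minor R (u # ws) cs \<oplus> y \<otimes> minor R (v # ws) cs"
    using x y uv D by (simp add: finsum_addf finsum_rdistr Pi_def)
  finally show ?thesis .
qed

lemma minor_Cons_Cons_vanishing:
  assumes ws: "entries_in R ws (j # cs)" and wj: "w j \<in> carrier R" and w: "\<forall>l\<in>set cs. w l = \<zero>"
  shows "minor R (w # ws) (j # cs) = w j \<otimes> minor R ws cs"
proof -
  let ?F = "\<lambda>p. signed R p (w ((j # cs) ! p) \<otimes> minor R ws (remove_nth p (j # cs)))"
  have D: "minor R ws (remove_nth p (j # cs)) \<in> carrier R" for p
    by (rule minor_closed[OF entries_in_remove_nth[OF ws]])
  have "minor R (w # ws) (j # cs) = (\<Oplus>p\<in>{..<Suc (length cs)}. if p = 0 then ?F 0 else \<zero>)"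
    unfolding minor.simps
    by (rule finsum_cong') (use w wj D in \<open>auto simp: gr0_conv_Suc\<close>)
  also have "\<dots> = ?F 0"
    using finsum_singleton[of 0 "{..<Suc (length cs)}" "\<lambda>_. ?F 0"] wj D by (simp add: eq_commute)
  finally show ?thesis by (simp add: remove_nth_def)
qed

lemma minor_swap_adj:
  "length ws = length cs \<Longrightarrow> entries_in R ws cs \<Longrightarrow> Suc i < length cs \<Longrightarrow>
   minor R ws (swap_adj i cs) = \<ominus> minor R ws cs"
proof (induction ws arbitrary: cs i)
  case Nil then show ?case by simp
next
  case (Cons w ws)
  let ?k = "length cs"
  let ?F = "\<lambda>p. signed R p (w (cs ! p) \<otimes> minor R ws (remove_nth p cs))"
  let ?cs = "swap_adj i cs"
  have entries': "entries_in R (w # ws) ?cs" using entries_in_subset[OF Cons.prems(2) set_swap_adj_subset[OF Cons.prems(3)]] .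
  have F_closed: "?F \<in> {..<?k} \<rightarrow> carrier R" using minor_term_closed[OF Cons.prems(2)] by auto
  have term_swap: "signed R p (w (?cs ! p) \<otimes> minor R ws (remove_nth p ?cs)) = \<ominus> ?F (Transposition.transpose i (Suc i) p)" if p: "p < ?k" for p
  proof -
    have w_closed: "\<And>q. q < ?k \<Longrightarrow> w (cs ! q) \<in> carrier R" using Cons.prems(2) by (auto simp: entries_in_Cons)
    have entries_ws: "entries_in R ws cs" using Cons.prems(2) by (simp add: entries_in_Cons)
    have len_ws: "length ws = ?k - 1" using Cons.prems(1) by simp
    consider "p < i" | "p = i" | "p = Suc i" | "Suc i < p" by linarith
    then show ?thesis
    proof cases
      case 1
      have "minor R ws (remove_nth p ?cs) = minor R ws (swap_adj (i - 1) (remove_nth p cs))" using 1 Cons.prems(3) by (simp add: remove_nth_swap_adj_less)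
      also have "\<dots> = \<ominus> minor R ws (remove_nth p cs)"
        by (rule Cons.IH) (use 1 Cons.prems p len_ws entries_ws in \<open>auto intro: entries_in_remove_nth\<close>)
      finally show ?thesis using 1 p Cons.prems(3) w_closed[OF p] minor_closed[OF entries_in_remove_nth[OF entries_ws]]
        by (simp add: nth_swap_adj Transposition.transpose_def r_minus signed_a_inv)
    next
      case 4
      have "minor R ws (remove_nth p ?cs) = minor R ws (swap_adj i (remove_nth p cs))" using 4 p by (simp add: remove_nth_swap_adj_greater)
      also have "\<dots> = \<ominus> minor R ws (remove_nth p cs)"
        by (rule Cons.IH) (use 4 Cons.prems p len_ws entries_ws in \<open>auto intro: entries_in_remove_nth\<close>)
      finally show ?thesis using 4 p Cons.prems(3) w_closed[OF p] minor_closed[OF entries_in_remove_nth[OF entries_ws]]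
        by (simp add: nth_swap_adj Transposition.transpose_def r_minus signed_a_inv)
    next
      case 2
      then show ?thesis using Cons.prems(3) w_closed minor_closed[OF entries_in_remove_nth[OF entries_ws]]
        by (simp add: nth_swap_adj Transposition.transpose_def remove_nth_swap_adj_self signed_Suc minus_minus)
    next
      case 3
      then show ?thesis using Cons.prems(3) w_closed minor_closed[OF entries_in_remove_nth[OF entries_ws]]
        by (simp add: nth_swap_adj Transposition.transpose_def remove_nth_swap_adj_Suc signed_Suc)
    qed
  qed
  have transpose_less: "\<And>p. p < ?k \<Longrightarrow> Transposition.transpose i (Suc i) p < ?k" using Cons.prems(3) by (auto simp: Transposition.transpose_def)
  have "minor R (w # ws) ?cs = finsum R (\<lambda>p. signed R p (w (?cs ! p) \<otimes> minor R ws (remove_nth p ?cs))) {..<?k}" by simp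
  also have "\<dots> = finsum R (\<lambda>p. \<ominus> ?F (Transposition.transpose i (Suc i) p)) {..<?k}"
  proof (rule finsum_cong'[OF refl])
    show "(\<lambda>p. \<ominus> ?F (Transposition.transpose i (Suc i) p)) \<in> {..<?k} \<rightarrow> carrier R" using F_closed transpose_less by (auto intro!: a_inv_closed)
    fix p assume "p \<in> {..<?k}" then show "signed R p (w (?cs ! p) \<otimes> minor R ws (remove_nth p ?cs)) = \<ominus> ?F (Transposition.transpose i (Suc i) p)"
      using term_swap by simp
  qed
  also have "\<dots> = \<ominus> finsum R (\<lambda>p. ?F (Transposition.transpose i (Suc i) p)) {..<?k}"
    by (rule finsum_a_inv) (use F_closed transpose_less in auto)
  also have "finsum R (\<lambda>p. ?F (Transposition.transpose i (Suc i) p)) {..<?k} = finsum R ?F (Transposition.transpose i (Suc i) ` {..<?k})"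
    by (rule add.finprod_reindex[symmetric]) (use F_closed Cons.prems(3) in auto)
  also have "\<dots> = finsum R ?F {..<?k}" using Cons.prems(3) by simp
  finally show ?case by simp
qed

lemma minor_move_right:
  "length ws = length cs \<Longrightarrow> entries_in R ws cs \<Longrightarrow> i + m < length cs \<Longrightarrow>
   minor R ws (move_right i m cs) = signed R m (minor R ws cs)"
proof (induction m)
  case 0 then show ?case by simp
next
  case (Suc m)
  have entries: "entries_in R ws (move_right i m cs)" using entries_in_subset[OF Suc.prems(2) set_move_right_subset] Suc.prems(3) by simp
  have "minor R ws (move_right i (Suc m) cs) = minor R ws (swap_adj (i + m) (move_right i m cs))" by simp
  also have "\<dots> = \<ominus> minor R ws (move_right i m cs)" by (rule minor_swap_adj) (use Suc.prems entries in auto)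
  also have "\<dots> = \<ominus> signed R m (minor R ws cs)" using Suc by simp
  finally show ?case using minor_closed[OF Suc.prems(2)] by (simp add: signed_Suc)
qed

lemma minor_repeated_column:
  "length ws = length cs \<Longrightarrow> entries_in R ws cs \<Longrightarrow> i < j \<Longrightarrow> j < length cs \<Longrightarrow> cs ! i = cs ! j \<Longrightarrow>
   minor R ws cs = \<zero>"
proof (induction ws arbitrary: cs i j)
  case Nil then show ?case by simp
next
  case (Cons w ws)
  let ?k = "length cs"
  let ?F = "\<lambda>p. signed R p (w (cs ! p) \<otimes> minor R ws (remove_nth p cs))"
  have entries_ws: "entries_in R ws cs" using Cons.prems(2) by (simp add: entries_in_Cons)
  have w_closed: "\<And>q. q < ?k \<Longrightarrow> w (cs ! q) \<in> carrier R" using Cons.prems(2) by (auto simp: entries_in_Cons)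
  have len_ws: "length ws = ?k - 1" using Cons.prems(1) by simp
  have F_closed: "?F \<in> {..<?k} \<rightarrow> carrier R" using minor_term_closed[OF Cons.prems(2)] by auto
  have rest: "?F p = \<zero>" if p: "p < ?k" "p \<noteq> i" "p \<noteq> j" for p
  proof -
    have "minor R ws (remove_nth p cs) = \<zero>"
    proof -
      consider "p < i" | "i < p \<and> p < j" | "j < p" using p by linarith
      then show ?thesis
      proof cases
        case 1
        show ?thesis by (rule Cons.IH[of _ "i - 1" "j - 1"]) (use 1 Cons.prems p len_ws entries_ws in \<open>auto simp: nth_remove_nth intro: entries_in_remove_nth\<close>)
      next
        case 2
        show ?thesis by (rule Cons.IH[of _ i "j - 1"]) (use 2 Cons.prems p len_ws entries_ws in \<open>auto simp: nth_remove_nth intro: entries_in_remove_nth\<close>)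
      next
        case 3
        show ?thesis by (rule Cons.IH[of _ i j]) (use 3 Cons.prems p len_ws entries_ws in \<open>auto simp: nth_remove_nth intro: entries_in_remove_nth\<close>)
      qed
    qed
    then show ?thesis using w_closed[OF p(1)] by simp
  qed
  have minor_i: "minor R ws (remove_nth i cs) = signed R (j - Suc i) (minor R ws (remove_nth j cs))"
  proof -
    have "remove_nth i cs = move_right i (j - Suc i) (remove_nth j cs)" by (rule remove_nth_eq_move_right) (use Cons.prems in auto)
    moreover have "minor R ws (move_right i (j - Suc i) (remove_nth j cs)) = signed R (j - Suc i) (minor R ws (remove_nth j cs))"
      by (rule minor_move_right) (use Cons.prems len_ws entries_ws in \<open>auto intro: entries_in_remove_nth\<close>)
    ultimately show ?thesis by simp
  qed
  let ?X = "w (cs ! j) \<otimes> minor R ws (remove_nth j cs)"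
  have X_closed: "?X \<in> carrier R" using w_closed Cons.prems minor_closed[OF entries_in_remove_nth[OF entries_ws]] by auto
  have F_i: "?F i = signed R (j - 1) ?X"
  proof -
    have "?F i = signed R i (w (cs ! j) \<otimes> signed R (j - Suc i) (minor R ws (remove_nth j cs)))" using minor_i Cons.prems(5) by simp
    also have "\<dots> = signed R i (signed R (j - Suc i) ?X)"
      using w_closed Cons.prems minor_closed[OF entries_in_remove_nth[OF entries_ws]] by (simp add: signed_mult)
    also have "\<dots> = signed R (j - 1) ?X" using X_closed Cons.prems(3) by (simp add: signed_signed)
    finally show ?thesis .
  qed
  have F_j: "?F j = \<ominus> signed R (j - 1) ?X"
  proof -
    have "j = Suc (j - 1)" using Cons.prems(3) by simp
    then have "signed R j ?X = signed R (Suc (j - 1)) ?X" by simp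
    then show ?thesis using X_closed by (simp add: signed_Suc)
  qed
  show ?case
    unfolding minor.simps
    by (rule finsum_cancel_pair[of "{..<?k}" i j]) (use F_closed rest F_i F_j X_closed Cons.prems in \<open>auto simp: minus_minus\<close>)
qed

lemma minor_cong: "length ws1 = length ws2 \<Longrightarrow> length cs1 = length cs2 \<Longrightarrow> entries_in R ws1 cs1 \<Longrightarrow> entries_in R ws2 cs2 \<Longrightarrow>
  (\<And>i q. i < length ws1 \<Longrightarrow> q < length cs1 \<Longrightarrow> (ws1 ! i) (cs1 ! q) = (ws2 ! i) (cs2 ! q)) \<Longrightarrow>
  minor R ws1 cs1 = minor R ws2 cs2"
proof (induction ws1 arbitrary: ws2 cs1 cs2)
  case Nil then show ?case by simp
next
  case (Cons w ws)
  obtain w2 ws2' where ws2: "ws2 = w2 # ws2'" using Cons.prems(1) by (cases ws2) auto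
  have sub: "minor R ws (remove_nth p cs1) = minor R ws2' (remove_nth p cs2)" if p: "p < length cs1" for p
  proof (rule Cons.IH)
    show "length ws = length ws2'" using Cons.prems ws2 by simp
    show "length (remove_nth p cs1) = length (remove_nth p cs2)" using Cons.prems p by simp
    show "entries_in R ws (remove_nth p cs1)" "entries_in R ws2' (remove_nth p cs2)" using Cons.prems ws2 by (auto simp: entries_in_Cons intro: entries_in_remove_nth)
    fix i q assume "i < length ws" "q < length (remove_nth p cs1)"
    then show "(ws ! i) (remove_nth p cs1 ! q) = (ws2' ! i) (remove_nth p cs2 ! q)"
      using Cons.prems(5)[of "Suc i"] Cons.prems(2) p ws2 by (auto simp: nth_remove_nth)
  qed
  have "minor R (w # ws) cs1 = finsum R (\<lambda>p. signed R p (w2 (cs2 ! p) \<otimes> minor R ws2' (remove_nth p cs2))) {..<length cs2}"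
  proof (simp, rule finsum_cong')
    show "{..<length cs1} = {..<length cs2}" using Cons.prems by simp
    show "(\<lambda>p. signed R p (w2 (cs2 ! p) \<otimes> minor R ws2' (remove_nth p cs2))) \<in> {..<length cs2} \<rightarrow> carrier R"
      using minor_term_closed[of w2 ws2' cs2] Cons.prems(4) ws2 by auto
    fix p assume "p \<in> {..<length cs2}"
    then show "signed R p (w (cs1 ! p) \<otimes> minor R ws (remove_nth p cs1)) = signed R p (w2 (cs2 ! p) \<otimes> minor R ws2' (remove_nth p cs2))"
      using sub Cons.prems(5)[of 0] Cons.prems(2) ws2 by simp
  qed
  then show ?case using ws2 by simp
qed

lemma entries_in_update:
  "entries_in R ws cs \<Longrightarrow> (\<And>w. w \<in> set ws \<Longrightarrow> g w \<in> carrier R) \<Longrightarrow>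
   entries_in R (map (\<lambda>w. w(l := g w)) ws) cs"
  by (auto simp: entries_in_def)

lemma minor_update_notin:
  "l \<notin> set cs \<Longrightarrow> entries_in R ws cs \<Longrightarrow> minor R (map (\<lambda>w. w(l := g w)) ws) cs = minor R ws cs"
proof (rule minor_cong)
  assume l: "l \<notin> set cs" and entries: "entries_in R ws cs"
  show "entries_in R (map (\<lambda>w. w(l := g w)) ws) cs" using entries l by (auto simp: entries_in_def)
  fix i q assume "i < length (map (\<lambda>w. w(l := g w)) ws)" "q < length cs"
  then show "(map (\<lambda>w. w(l := g w)) ws ! i) (cs ! q) = (ws ! i) (cs ! q)" using l by auto
qed auto

lemma minor_update_linear:
  assumes "length ws = length cs" "distinct cs" "l \<in> set cs" "entries_in R ws cs"
    "x \<in> carrier R" "y \<in> carrier R"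
    "\<And>w. w \<in> set ws \<Longrightarrow> F1 w \<in> carrier R" "\<And>w. w \<in> set ws \<Longrightarrow> F2 w \<in> carrier R"
  shows "minor R (map (\<lambda>w. w(l := x \<otimes> F1 w \<oplus> y \<otimes> F2 w)) ws) cs
       = x \<otimes> minor R (map (\<lambda>w. w(l := F1 w)) ws) cs \<oplus> y \<otimes> minor R (map (\<lambda>w. w(l := F2 w)) ws) cs"
  using assms
proof (induction ws arbitrary: cs)
  case Nil then show ?case by simp
next
  case (Cons w ws)
  let ?k = "length cs"
  let ?U = "\<lambda>g. map (\<lambda>w. w(l := g w)) ws"
  let ?t = "\<lambda>g p. signed R p ((w(l := g w)) (cs ! p) \<otimes> minor R (?U g) (remove_nth p cs))"
  have entries_ws: "entries_in R ws cs" using Cons.prems(4) by (simp add: entries_in_Cons)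
  have w_closed: "\<And>q. q < ?k \<Longrightarrow> w (cs ! q) \<in> carrier R" using Cons.prems(4) by (auto simp: entries_in_Cons)
  have F_closed: "\<And>v. v \<in> set (w # ws) \<Longrightarrow> F1 v \<in> carrier R" "\<And>v. v \<in> set (w # ws) \<Longrightarrow> F2 v \<in> carrier R"
    using Cons.prems by auto
  have D_closed: "minor R (?U F1) (remove_nth p cs) \<in> carrier R" "minor R (?U F2) (remove_nth p cs) \<in> carrier R" for p
    by (rule minor_closed, rule entries_in_update[OF entries_in_remove_nth[OF entries_ws]], use F_closed in auto)+
  have terms_closed: "?t F1 p \<in> carrier R" "?t F2 p \<in> carrier R" if "p < ?k" for p
    using w_closed[OF that] F_closed D_closed by auto
  have term_eq: "?t (\<lambda>v. x \<otimes> F1 v \<oplus> y \<otimes> F2 v) p = x \<otimes> ?t F1 p \<oplus> y \<otimes> ?t F2 p" if p: "p < ?k" for p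
  proof (cases "cs ! p = l")
    case True
    have l_notin: "l \<notin> set (remove_nth p cs)" using nth_notin_remove_nth[OF Cons.prems(2) p] True by simp
    have D: "\<And>g. minor R (?U g) (remove_nth p cs) = minor R ws (remove_nth p cs)"
      by (rule minor_update_notin[OF l_notin entries_in_remove_nth[OF entries_ws]])
    have "minor R ws (remove_nth p cs) \<in> carrier R" by (rule minor_closed[OF entries_in_remove_nth[OF entries_ws]])
    then show ?thesis using True D F_closed Cons.prems(5,6) by (simp add: l_distr m_assoc signed_add signed_mult)
  next
    case False
    have "minor R (?U (\<lambda>v. x \<otimes> F1 v \<oplus> y \<otimes> F2 v)) (remove_nth p cs)
        = x \<otimes> minor R (?U F1) (remove_nth p cs) \<oplus> y \<otimes> minor R (?U F2) (remove_nth p cs)"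
    proof (rule Cons.IH)
      show "length ws = length (remove_nth p cs)" using Cons.prems(1) p by simp
      show "distinct (remove_nth p cs)" by (rule distinct_remove_nth[OF Cons.prems(2) p])
      show "l \<in> set (remove_nth p cs)" by (rule in_set_remove_nth[OF Cons.prems(3)]) (use False p in auto)
      show "entries_in R ws (remove_nth p cs)" by (rule entries_in_remove_nth[OF entries_ws])
    qed (use F_closed Cons.prems(5,6) in auto)
    then show ?thesis
      using False w_closed[OF p] D_closed Cons.prems(5,6) by (simp add: r_distr m_lcomm signed_add signed_mult)
  qed
  have "minor R (map (\<lambda>w. w(l := x \<otimes> F1 w \<oplus> y \<otimes> F2 w)) (w # ws)) cs
      = finsum R (\<lambda>p. x \<otimes> ?t F1 p \<oplus> y \<otimes> ?t F2 p) {..<?k}"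
    by (simp only: list.map minor.simps) (rule finsum_cong'[OF refl], use term_eq terms_closed Cons.prems(5,6) in auto)
  also have "\<dots> = x \<otimes> finsum R (?t F1) {..<?k} \<oplus> y \<otimes> finsum R (?t F2) {..<?k}"
    using terms_closed Cons.prems(5,6) by (simp add: finsum_addf finsum_rdistr Pi_def)
  finally show ?case by (simp only: list.map minor.simps)
qed

lemma minor_update_add:
  assumes "length ws = length cs" "distinct cs" "l \<in> set cs" "entries_in R ws cs"
    and F: "\<And>w. w \<in> set ws \<Longrightarrow> F1 w \<in> carrier R" "\<And>w. w \<in> set ws \<Longrightarrow> F2 w \<in> carrier R"
  shows "minor R (map (\<lambda>w. w(l := F1 w \<oplus> F2 w)) ws) cs
       = minor R (map (\<lambda>w. w(l := F1 w)) ws) cs \<oplus> minor R (map (\<lambda>w. w(l := F2 w)) ws) cs"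
proof -
  have "minor R (map (\<lambda>w. w(l := \<one> \<otimes> F1 w \<oplus> \<one> \<otimes> F2 w)) ws) cs
      = \<one> \<otimes> minor R (map (\<lambda>w. w(l := F1 w)) ws) cs \<oplus> \<one> \<otimes> minor R (map (\<lambda>w. w(l := F2 w)) ws) cs"
    by (rule minor_update_linear) (use assms in auto)
  moreover have "map (\<lambda>w. w(l := \<one> \<otimes> F1 w \<oplus> \<one> \<otimes> F2 w)) ws = map (\<lambda>w. w(l := F1 w \<oplus> F2 w)) ws"
    using F by simp
  moreover have "minor R (map (\<lambda>w. w(l := F1 w)) ws) cs \<in> carrier R" "minor R (map (\<lambda>w. w(l := F2 w)) ws) cs \<in> carrier R"
    using F by (auto intro!: minor_closed entries_in_update[OF assms(4)])
  ultimately show ?thesis by simp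
qed

lemma minor_update_smult:
  assumes "length ws = length cs" "distinct cs" "l \<in> set cs" "entries_in R ws cs" "c \<in> carrier R"
    and F: "\<And>w. w \<in> set ws \<Longrightarrow> F w \<in> carrier R"
  shows "minor R (map (\<lambda>w. w(l := c \<otimes> F w)) ws) cs = c \<otimes> minor R (map (\<lambda>w. w(l := F w)) ws) cs"
proof -
  have "minor R (map (\<lambda>w. w(l := c \<otimes> F w \<oplus> \<zero> \<otimes> F w)) ws) cs
      = c \<otimes> minor R (map (\<lambda>w. w(l := F w)) ws) cs \<oplus> \<zero> \<otimes> minor R (map (\<lambda>w. w(l := F w)) ws) cs"
    by (rule minor_update_linear) (use assms in auto)
  moreover have "map (\<lambda>w. w(l := c \<otimes> F w \<oplus> \<zero> \<otimes> F w)) ws = map (\<lambda>w. w(l := c \<otimes> F w)) ws"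
    using F assms(5) by simp
  moreover have "minor R (map (\<lambda>w. w(l := F w)) ws) cs \<in> carrier R"
    using F by (auto intro!: minor_closed entries_in_update[OF assms(4)])
  ultimately show ?thesis using assms(5) by simp
qed

lemma minor_update_zero:
  assumes "length ws = length cs" "distinct cs" "l \<in> set cs" "entries_in R ws cs"
  shows "minor R (map (\<lambda>w. w(l := \<zero>)) ws) cs = \<zero>"
proof -
  have "minor R (map (\<lambda>w. w(l := \<zero> \<otimes> \<zero>)) ws) cs = \<zero> \<otimes> minor R (map (\<lambda>w. w(l := \<zero>)) ws) cs"
    by (rule minor_update_smult[OF assms]) auto
  moreover have "minor R (map (\<lambda>w. w(l := \<zero>)) ws) cs \<in> carrier R"
    by (rule minor_closed, rule entries_in_update[OF assms(4)]) auto
  ultimately show ?thesis by simp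
qed

lemma minor_update_finsum:
  assumes "length ws = length cs" "distinct cs" "l \<in> set cs" "entries_in R ws cs" "finite I"
    "\<And>s w. s \<in> I \<Longrightarrow> w \<in> set ws \<Longrightarrow> G s w \<in> carrier R"
  shows "minor R (map (\<lambda>w. w(l := finsum R (\<lambda>s. G s w) I)) ws) cs = finsum R (\<lambda>s. minor R (map (\<lambda>w. w(l := G s w)) ws) cs) I"
  using assms(5,6)
proof (induction I rule: finite_induct)
  case empty then show ?case by (simp only: finsum_empty minor_update_zero[OF assms(1-4)])
next
  case (insert a I)
  have G_closed: "\<And>s w. s \<in> I \<Longrightarrow> w \<in> set ws \<Longrightarrow> G s w \<in> carrier R" using insert by auto
  have G_a: "\<And>w. w \<in> set ws \<Longrightarrow> G a w \<in> carrier R" using insert by auto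
  have map_eq: "map (\<lambda>w. w(l := finsum R (\<lambda>s. G s w) (insert a I))) ws = map (\<lambda>w. w(l := G a w \<oplus> finsum R (\<lambda>s. G s w) I)) ws"
    by (rule map_cong[OF refl]) (use insert G_closed G_a in \<open>simp add: finsum_insert Pi_def\<close>)
  have add_step: "minor R (map (\<lambda>w. w(l := G a w \<oplus> finsum R (\<lambda>s. G s w) I)) ws) cs =
      minor R (map (\<lambda>w. w(l := G a w)) ws) cs \<oplus> minor R (map (\<lambda>w. w(l := finsum R (\<lambda>s. G s w) I)) ws) cs"
    by (rule minor_update_add[OF assms(1-4)]) (use G_a G_closed in \<open>auto intro!: finsum_closed\<close>)
  have "minor R (map (\<lambda>w. w(l := finsum R (\<lambda>s. G s w) (insert a I))) ws) cs =
      minor R (map (\<lambda>w. w(l := G a w)) ws) cs \<oplus> minor R (map (\<lambda>w. w(l := finsum R (\<lambda>s. G s w) I)) ws) cs"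
    by (subst map_eq, rule add_step)
  also have "\<dots> = minor R (map (\<lambda>w. w(l := G a w)) ws) cs \<oplus> finsum R (\<lambda>s. minor R (map (\<lambda>w. w(l := G s w)) ws) cs) I"
  proof -
    have IH': "minor R (map (\<lambda>w. w(l := finsum R (\<lambda>s. G s w) I)) ws) cs = finsum R (\<lambda>s. minor R (map (\<lambda>w. w(l := G s w)) ws) cs) I"
      by (rule insert.IH) (use G_closed in auto)
    show ?thesis by (simp only: IH')
  qed
  also have "\<dots> = finsum R (\<lambda>s. minor R (map (\<lambda>w. w(l := G s w)) ws) cs) (insert a I)"
  proof (rule finsum_insert[symmetric])
    show "finite I" "a \<notin> I" using insert by auto
    show "(\<lambda>s. minor R (map (\<lambda>w. w(l := G s w)) ws) cs) \<in> I \<rightarrow> carrier R"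
      using G_closed by (auto intro!: minor_closed entries_in_update[OF assms(4)])
    show "minor R (map (\<lambda>w. w(l := G a w)) ws) cs \<in> carrier R"
      using G_a by (auto intro!: minor_closed entries_in_update[OF assms(4)])
  qed
  finally show ?case .
qed

lemma minor_update_copy:
  assumes len: "length ws = length cs" and d: "distinct cs" and l: "l \<in> set cs" and s: "s \<in> set cs"
    and s_ne_l: "s \<noteq> l" and entries: "entries_in R ws cs"
  shows "minor R (map (\<lambda>w. w(l := w s)) ws) cs = \<zero>"
proof -
  obtain q where q: "q < length cs" "cs ! q = l" using l by (auto simp: in_set_conv_nth)
  obtain q' where q': "q' < length cs" "cs ! q' = s" using s by (auto simp: in_set_conv_nth)
  have q_ne_q': "q \<noteq> q'" using q q' s_ne_l by auto
  let ?cs = "cs[q := s]"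
  have entries_upd: "entries_in R ws ?cs" by (rule entries_in_subset[OF entries]) (use s in \<open>auto dest: subsetD[OF set_update_subset_insert]\<close>)
  have "minor R (map (\<lambda>w. w(l := w s)) ws) cs = minor R ws ?cs"
  proof (rule minor_cong)
    show "entries_in R (map (\<lambda>w. w(l := w s)) ws) cs" by (rule entries_in_update[OF entries]) (use entries s in \<open>auto simp: entries_in_def\<close>)
    fix i r assume i: "i < length (map (\<lambda>w. w(l := w s)) ws)" and r: "r < length cs"
    show "(map (\<lambda>w. w(l := w s)) ws ! i) (cs ! r) = (ws ! i) (?cs ! r)"
    proof (cases "r = q")
      case True then show ?thesis using i q by simp
    next
      case False
      then have "cs ! r \<noteq> l" using q r d by (metis nth_eq_iff_index_eq)
      then show ?thesis using i r False by simp
    qed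
  qed (use entries_upd in auto)
  also have "\<dots> = \<zero>"
  proof (rule minor_repeated_column[of _ _ "min q q'" "max q q'"])
    show "length ws = length ?cs" using len by simp
    show "entries_in R ws ?cs" by (rule entries_upd)
    show "min q q' < max q q'" using q_ne_q' by simp
    show "max q q' < length ?cs" using q q' by simp
    show "?cs ! min q q' = ?cs ! max q q'" using q q' q_ne_q' by (cases "q < q'") (auto simp: min_def max_def)
  qed
  finally show ?thesis .
qed

lemma minor_cramer:
  assumes len: "length ws = length cs" and d: "distinct cs" and l: "l \<in> set cs" and entries: "entries_in R ws cs"
    and y: "\<And>s. s \<in> set cs \<Longrightarrow> y s \<in> carrier R"
    and H: "\<And>w. w \<in> set ws \<Longrightarrow> finsum R (\<lambda>s. y s \<otimes> w s) (set cs) = \<zero>"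
  shows "y l \<otimes> minor R ws cs = \<zero>"
proof -
  have w_closed: "\<And>w s. w \<in> set ws \<Longrightarrow> s \<in> set cs \<Longrightarrow> w s \<in> carrier R" using entries by (auto simp: entries_in_def)
  have "\<zero> = minor R (map (\<lambda>w. w(l := \<zero>)) ws) cs" using minor_update_zero[OF len d l entries] by simp
  also have "\<dots> = minor R (map (\<lambda>w. w(l := finsum R (\<lambda>s. y s \<otimes> w s) (set cs))) ws) cs"
  proof -
    have map_eq: "map (\<lambda>w. w(l := \<zero>)) ws = map (\<lambda>w. w(l := finsum R (\<lambda>s. y s \<otimes> w s) (set cs))) ws"
      by (rule map_cong[OF refl]) (simp add: H)
    show ?thesis by (simp only: map_eq)
  qed
  also have "\<dots> = finsum R (\<lambda>s. minor R (map (\<lambda>w. w(l := y s \<otimes> w s)) ws) cs) (set cs)"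
    by (rule minor_update_finsum[OF len d l entries]) (use y w_closed in auto)
  also have "\<dots> = finsum R (\<lambda>s. y s \<otimes> minor R (map (\<lambda>w. w(l := w s)) ws) cs) (set cs)"
  proof (rule finsum_cong'[OF refl])
    show "(\<lambda>s. y s \<otimes> minor R (map (\<lambda>w. w(l := w s)) ws) cs) \<in> set cs \<rightarrow> carrier R"
      using y w_closed by (auto intro!: minor_closed entries_in_update[OF entries])
    fix s assume s: "s \<in> set cs"
    show "minor R (map (\<lambda>w. w(l := y s \<otimes> w s)) ws) cs = y s \<otimes> minor R (map (\<lambda>w. w(l := w s)) ws) cs"
      by (rule minor_update_smult[OF len d l entries]) (use y w_closed s in auto)
  qed
  also have "\<dots> = y l \<otimes> minor R ws cs"
  proof -
    let ?h = "\<lambda>s. y s \<otimes> minor R (map (\<lambda>w. w(l := w s)) ws) cs"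
    have h_closed: "?h \<in> set cs \<rightarrow> carrier R" using y w_closed by (auto intro!: minor_closed entries_in_update[OF entries])
    have set_cs_eq: "set cs = insert l (set cs - {l})" using l by auto
    have h_closed': "?h \<in> (set cs - {l}) \<rightarrow> carrier R" using h_closed by auto
    have h_l: "?h l \<in> carrier R" by (rule funcset_mem[OF h_closed l])
    have "finsum R ?h (insert l (set cs - {l})) = ?h l \<oplus> finsum R ?h (set cs - {l})"
      by (rule finsum_insert[OF _ _ h_closed' h_l]) auto
    then have "finsum R ?h (set cs) = ?h l \<oplus> finsum R ?h (set cs - {l})" using set_cs_eq by simp
    also have "finsum R ?h (set cs - {l}) = \<zero>"
      by (rule add.finprod_one_eqI) (use minor_update_copy[OF len d l _ _ entries] y in auto)
    also have "?h l \<oplus> \<zero> = ?h l" by (rule r_zero[OF h_l])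
    also have "map (\<lambda>w. w(l := w l)) ws = ws" by simp
    finally show ?thesis .
  qed
  finally show ?thesis by simp
qed

end

lemma (in ring_hom_cring) minor_hom:
  "entries_in R ws cs \<Longrightarrow> h (minor R ws cs) = minor S (map (\<lambda>w l. h (w l)) ws) cs"
proof (induction ws arbitrary: cs)
  case Nil then show ?case by simp
next
  case (Cons w ws)
  have entries_ws: "entries_in R ws cs" using Cons.prems by (simp add: entries_in_Cons)
  have w_closed: "\<And>q. q < length cs \<Longrightarrow> w (cs ! q) \<in> carrier R" using Cons.prems by (auto simp: entries_in_Cons)
  have D_closed: "\<And>p. minor R ws (remove_nth p cs) \<in> carrier R" by (rule R.minor_closed[OF entries_in_remove_nth[OF entries_ws]])
  have signed_hom: "\<And>p x. x \<in> carrier R \<Longrightarrow> h (signed R p x) = signed S p (h x)" by (simp add: signed_def)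
  have "h (minor R (w # ws) cs) = finsum S (\<lambda>p. h (signed R p (w (cs ! p) \<otimes> minor R ws (remove_nth p cs)))) {..<length cs}"
    using w_closed D_closed by (simp add: Pi_def comp_def)
  also have "\<dots> = finsum S (\<lambda>p. signed S p (h (w (cs ! p)) \<otimes>\<^bsub>S\<^esub> minor S (map (\<lambda>w l. h (w l)) ws) (remove_nth p cs))) {..<length cs}"
  proof (rule S.finsum_cong'[OF refl])
    show "(\<lambda>p. signed S p (h (w (cs ! p)) \<otimes>\<^bsub>S\<^esub> minor S (map (\<lambda>w l. h (w l)) ws) (remove_nth p cs))) \<in> {..<length cs} \<rightarrow> carrier S"
    proof
      fix p assume p: "p \<in> {..<length cs}"
      have "minor S (map (\<lambda>w l. h (w l)) ws) (remove_nth p cs) = h (minor R ws (remove_nth p cs))" using Cons.IH[OF entries_in_remove_nth[OF entries_ws]] by simp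
      then show "signed S p (h (w (cs ! p)) \<otimes>\<^bsub>S\<^esub> minor S (map (\<lambda>w l. h (w l)) ws) (remove_nth p cs)) \<in> carrier S"
        using w_closed p D_closed by simp
    qed
    fix p assume p: "p \<in> {..<length cs}"
    show "h (signed R p (w (cs ! p) \<otimes> minor R ws (remove_nth p cs))) = signed S p (h (w (cs ! p)) \<otimes>\<^bsub>S\<^esub> minor S (map (\<lambda>w l. h (w l)) ws) (remove_nth p cs))"
      using w_closed p D_closed Cons.IH[OF entries_in_remove_nth[OF entries_ws]] signed_hom by simp
  qed
  finally show ?case by simp
qed

section \<open>Finite extensions\<close>

lemma (in abelian_group) minus_minus_cancel:
  assumes "x \<in> carrier G" "y \<in> carrier G"
  shows "x \<ominus> (x \<ominus> y) = y"
proof -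
  have "x \<ominus> (x \<ominus> y) = (x \<oplus> \<ominus> x) \<oplus> y" using assms by (simp add: minus_eq minus_add minus_minus a_assoc)
  then show ?thesis using assms by (simp add: r_neg)
qed

text \<open>Fix generators \<open>S\<close> of \<open>T\<close> over \<open>R\<close>; the rows of the relation matrix are the vectors
  \<open>w : S \<rightarrow> R\<close> with \<open>\<Sum>\<^sub>s f(w s) s = 0\<close>.  By Cramer's rule its \<open>|S|\<close>-minors annihilate \<open>T\<close>, so they
  vanish as \<open>f\<close> is injective.  Descending in the size, if all minors with one more row map \<open>M\<close>
  into the \<open>a\<close>-power torsion, then so do the minors themselves: bordering a minor \<open>D\<close> by the
  coordinate row of \<open>t \<in> T\<close> and the column of a further generator \<open>s\<close> gives a map \<open>(m, t) \<mapsto> D\<^sub>t m\<close>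
  that is bilinear modulo torsion, and \<open>m \<otimes> f(a)\<^sup>k s = 0\<close> yields
  \<open>a\<^sup>k D m = D\<^bsub>f(a)\<^sup>k s\<^esub> m \<equiv> 0\<close>.  The empty minor \<open>1\<close> gives the claim.\<close>

locale finite_base_change = base_change_setting R T f M
  for R :: "'r ring" and T :: "'t ring" and f :: "'r \<Rightarrow> 't" and M :: "('r,'m) module" +
  fixes a :: 'r and S :: "'t set"
  assumes a: "a \<in> carrier R" and S: "finite S" "S \<subseteq> carrier T"
    and spans: "\<And>t. t \<in> carrier T \<Longrightarrow> \<exists>c. c \<in> S \<rightarrow> carrier R \<and> t = (\<Oplus>\<^bsub>T\<^esub>s\<in>S. f (c s) \<otimes>\<^bsub>T\<^esub> s)"
    and inj: "inj_on f (carrier R)"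
    and pure_tensor_torsion: "\<And>m t. m \<in> carrier M \<Longrightarrow> t \<in> carrier T \<Longrightarrow>
      \<exists>k::nat. delta (m, f (a [^]\<^bsub>R\<^esub> k) \<otimes>\<^bsub>T\<^esub> t) \<in> tensor_relations R M T\<^sub>R"
begin

definition coord_vectors :: "('t \<Rightarrow> 'r) set" where
  "coord_vectors = {w. \<forall>s\<in>S. w s \<in> carrier R}"

definition lin_comb :: "('t \<Rightarrow> 'r) \<Rightarrow> 't" where
  "lin_comb w = (\<Oplus>\<^bsub>T\<^esub>s\<in>S. f (w s) \<otimes>\<^bsub>T\<^esub> s)"

definition relation_vectors :: "('t \<Rightarrow> 'r) set" where
  "relation_vectors = {w \<in> coord_vectors. lin_comb w = \<zero>\<^bsub>T\<^esub>}"

definition coords :: "'t \<Rightarrow> 't \<Rightarrow> 'r" where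
  "coords t = (SOME w. w \<in> coord_vectors \<and> lin_comb w = t)"

abbreviation (input) torsion :: "'m set" where
  "torsion \<equiv> power_torsion R M a"

lemma torsion_submodule: "submodule torsion R M"
  by (rule M.power_torsion_submodule[OF a])

lemma torsion_additive_subgroup: "additive_subgroup torsion M"
  by (rule additive_subgroup.intro[OF submodule.axioms(1)[OF torsion_submodule]])

lemma lin_comb_closed: "w \<in> coord_vectors \<Longrightarrow> lin_comb w \<in> carrier T"
  unfolding lin_comb_def coord_vectors_def using S by (auto intro!: T.finsum_closed)

lemma coords: "t \<in> carrier T \<Longrightarrow> coords t \<in> coord_vectors \<and> lin_comb (coords t) = t"
proof -
  assume t: "t \<in> carrier T"
  obtain c where "c \<in> S \<rightarrow> carrier R" "t = (\<Oplus>\<^bsub>T\<^esub>s\<in>S. f (c s) \<otimes>\<^bsub>T\<^esub> s)" using spans[OF t] by blast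
  then have "\<exists>w. w \<in> coord_vectors \<and> lin_comb w = t" by (auto simp: coord_vectors_def lin_comb_def)
  then show ?thesis unfolding coords_def by (rule someI_ex)
qed

lemma lin_comb_linear:
  assumes u: "u \<in> coord_vectors" and v: "v \<in> coord_vectors" and x: "x \<in> carrier R" and y: "y \<in> carrier R"
  shows "lin_comb (\<lambda>s. x \<otimes>\<^bsub>R\<^esub> u s \<oplus>\<^bsub>R\<^esub> y \<otimes>\<^bsub>R\<^esub> v s) = f x \<otimes>\<^bsub>T\<^esub> lin_comb u \<oplus>\<^bsub>T\<^esub> f y \<otimes>\<^bsub>T\<^esub> lin_comb v"
proof -
  have uv: "f (u s) \<in> carrier T" "f (v s) \<in> carrier T" "s \<in> carrier T" if "s \<in> S" for s
    using u v S that by (auto simp: coord_vectors_def)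
  have "lin_comb (\<lambda>s. x \<otimes>\<^bsub>R\<^esub> u s \<oplus>\<^bsub>R\<^esub> y \<otimes>\<^bsub>R\<^esub> v s)
      = (\<Oplus>\<^bsub>T\<^esub>s\<in>S. f x \<otimes>\<^bsub>T\<^esub> (f (u s) \<otimes>\<^bsub>T\<^esub> s) \<oplus>\<^bsub>T\<^esub> f y \<otimes>\<^bsub>T\<^esub> (f (v s) \<otimes>\<^bsub>T\<^esub> s))"
    unfolding lin_comb_def
    by (rule T.finsum_cong'[OF refl]) (use u v x y uv in \<open>auto simp: coord_vectors_def T.l_distr T.m_assoc\<close>)
  also have "\<dots> = f x \<otimes>\<^bsub>T\<^esub> lin_comb u \<oplus>\<^bsub>T\<^esub> f y \<otimes>\<^bsub>T\<^esub> lin_comb v"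
    unfolding lin_comb_def using x y uv S(1) by (simp add: T.finsum_addf T.finsum_rdistr Pi_def)
  finally show ?thesis .
qed

lemma relation_vectors_diff:
  assumes u: "u \<in> coord_vectors" and v: "v \<in> coord_vectors" and uv: "lin_comb u = lin_comb v"
  shows "(\<lambda>s. \<one>\<^bsub>R\<^esub> \<otimes>\<^bsub>R\<^esub> u s \<oplus>\<^bsub>R\<^esub> (\<ominus>\<^bsub>R\<^esub> \<one>\<^bsub>R\<^esub>) \<otimes>\<^bsub>R\<^esub> v s) \<in> relation_vectors"
proof -
  have "lin_comb (\<lambda>s. \<one>\<^bsub>R\<^esub> \<otimes>\<^bsub>R\<^esub> u s \<oplus>\<^bsub>R\<^esub> (\<ominus>\<^bsub>R\<^esub> \<one>\<^bsub>R\<^esub>) \<otimes>\<^bsub>R\<^esub> v s) = \<zero>\<^bsub>T\<^esub>"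
    using lin_comb_linear[OF u v R.one_closed R.a_inv_closed[OF R.one_closed]] lin_comb_closed[OF v] uv
    by (simp add: f.hom_a_inv T.l_minus T.r_neg)
  then show ?thesis using u v unfolding relation_vectors_def coord_vectors_def by auto
qed

lemma relation_minors_vanish:
  assumes len: "length vs = length cs" and d: "distinct cs" and cs: "set cs = S"
    and vs: "set vs \<subseteq> relation_vectors"
  shows "minor R vs cs = \<zero>\<^bsub>R\<^esub>"
proof -
  have entries: "entries_in R vs cs"
    using vs cs by (auto simp: entries_in_def relation_vectors_def coord_vectors_def)
  let ?ws = "map (\<lambda>w l. f (w l)) vs"
  have entries_T: "entries_in T ?ws cs" using entries by (auto simp: entries_in_def)
  have D: "minor T ?ws cs \<in> carrier T" by (rule T.minor_closed[OF entries_T])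
  have annihilates: "s \<otimes>\<^bsub>T\<^esub> minor T ?ws cs = \<zero>\<^bsub>T\<^esub>" if "s \<in> S" for s
  proof (rule T.minor_cramer[OF _ d _ entries_T])
    show "length ?ws = length cs" using len by simp
    show "s \<in> set cs" using that cs by simp
    show "l \<in> carrier T" if "l \<in> set cs" for l using that cs S by auto
  next
    fix w' assume "w' \<in> set ?ws"
    then obtain w where w: "w \<in> relation_vectors" "w' = (\<lambda>l. f (w l))" using vs by auto
    have "(\<Oplus>\<^bsub>T\<^esub>s\<in>set cs. s \<otimes>\<^bsub>T\<^esub> w' s) = lin_comb w"
      unfolding lin_comb_def cs using w S
      by (intro T.finsum_cong') (auto simp: relation_vectors_def coord_vectors_def T.m_comm)
    then show "(\<Oplus>\<^bsub>T\<^esub>s\<in>set cs. s \<otimes>\<^bsub>T\<^esub> w' s) = \<zero>\<^bsub>T\<^esub>" using w by (simp add: relation_vectors_def)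
  qed
  obtain c where c: "c \<in> coord_vectors" "lin_comb c = \<one>\<^bsub>T\<^esub>" using coords[OF T.one_closed] by blast
  have "minor T ?ws cs = lin_comb c \<otimes>\<^bsub>T\<^esub> minor T ?ws cs" using c D by simp
  also have "\<dots> = (\<Oplus>\<^bsub>T\<^esub>s\<in>S. f (c s) \<otimes>\<^bsub>T\<^esub> (s \<otimes>\<^bsub>T\<^esub> minor T ?ws cs))"
    unfolding lin_comb_def using c S D
    by (subst T.finsum_ldistr) (auto simp: coord_vectors_def T.m_assoc intro!: T.finsum_cong')
  also have "\<dots> = (\<Oplus>\<^bsub>T\<^esub>s\<in>S. \<zero>\<^bsub>T\<^esub>)"
    by (rule T.finsum_cong'[OF refl]) (use annihilates c in \<open>auto simp: coord_vectors_def\<close>)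
  also have "\<dots> = \<zero>\<^bsub>T\<^esub>" by simp
  finally have "f (minor R vs cs) = f \<zero>\<^bsub>R\<^esub>" using f.minor_hom[OF entries] by simp
  then show ?thesis using inj_onD[OF inj _ R.minor_closed[OF entries] R.zero_closed] by blast
qed

context
  fixes vs :: "('t \<Rightarrow> 'r) list" and cs :: "'t list" and j :: 't
  assumes vs: "set vs \<subseteq> relation_vectors" and len: "length vs = length cs"
    and cs: "set cs \<subseteq> S" and j: "j \<in> S" "j \<notin> set cs"
    and extended_minors: "\<And>w m. w \<in> relation_vectors \<Longrightarrow> m \<in> carrier M \<Longrightarrow>
      minor R (w # vs) (j # cs) \<odot>\<^bsub>M\<^esub> m \<in> torsion"
begin

lemma entries_extended: "entries_in R vs (j # cs)"
  using vs cs j by (auto simp: entries_in_def relation_vectors_def coord_vectors_def)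

lemma minor_Cons_closed: "u \<in> coord_vectors \<Longrightarrow> minor R (u # vs) (j # cs) \<in> carrier R"
  using entries_extended cs j by (intro R.minor_closed) (auto simp: entries_in_def coord_vectors_def)

lemma minor_Cons_coord_linear:
  assumes "u \<in> coord_vectors" "v \<in> coord_vectors" "x \<in> carrier R" "y \<in> carrier R"
  shows "minor R ((\<lambda>s. x \<otimes>\<^bsub>R\<^esub> u s \<oplus>\<^bsub>R\<^esub> y \<otimes>\<^bsub>R\<^esub> v s) # vs) (j # cs)
       = x \<otimes>\<^bsub>R\<^esub> minor R (u # vs) (j # cs) \<oplus>\<^bsub>R\<^esub> y \<otimes>\<^bsub>R\<^esub> minor R (v # vs) (j # cs)"
  by (rule R.minor_Cons_linear[OF entries_extended assms(3,4)])
    (use assms(1,2) cs j in \<open>auto simp: coord_vectors_def\<close>)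

lemma minor_Cons_congruent:
  assumes u: "u \<in> coord_vectors" and v: "v \<in> coord_vectors" and uv: "lin_comb u = lin_comb v"
    and m: "m \<in> carrier M"
  shows "minor R (u # vs) (j # cs) \<odot>\<^bsub>M\<^esub> m \<ominus>\<^bsub>M\<^esub> minor R (v # vs) (j # cs) \<odot>\<^bsub>M\<^esub> m \<in> torsion"
proof -
  let ?w = "\<lambda>s. \<one>\<^bsub>R\<^esub> \<otimes>\<^bsub>R\<^esub> u s \<oplus>\<^bsub>R\<^esub> (\<ominus>\<^bsub>R\<^esub> \<one>\<^bsub>R\<^esub>) \<otimes>\<^bsub>R\<^esub> v s"
  have "minor R (?w # vs) (j # cs) \<odot>\<^bsub>M\<^esub> m \<in> torsion"
    by (rule extended_minors[OF relation_vectors_diff[OF u v uv] m])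
  moreover have "minor R (?w # vs) (j # cs) = minor R (u # vs) (j # cs) \<ominus>\<^bsub>R\<^esub> minor R (v # vs) (j # cs)"
    using minor_Cons_coord_linear[OF u v R.one_closed R.a_inv_closed[OF R.one_closed]]
      minor_Cons_closed[OF u] minor_Cons_closed[OF v] by (simp add: R.l_minus a_minus_def)
  ultimately show ?thesis
    using minor_Cons_closed[OF u] minor_Cons_closed[OF v] m
    by (simp add: a_minus_def M.smult_l_distr M.smult_l_minus)
qed

definition minor_pairing :: "'m \<Rightarrow> 't \<Rightarrow> 'm" where
  "minor_pairing m t = minor R (coords t # vs) (j # cs) \<odot>\<^bsub>M\<^esub> m"

lemma minor_coords_closed: "t \<in> carrier T \<Longrightarrow> minor R (coords t # vs) (j # cs) \<in> carrier R"
  using minor_Cons_closed coords by blast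

lemma minor_pairing_add_right:
  assumes m: "m \<in> carrier M" and t: "t \<in> carrier T" "t' \<in> carrier T"
  shows "minor_pairing m (t \<oplus>\<^bsub>T\<^esub> t') \<ominus>\<^bsub>M\<^esub> minor_pairing m t \<ominus>\<^bsub>M\<^esub> minor_pairing m t' \<in> torsion"
proof -
  let ?w = "\<lambda>s. \<one>\<^bsub>R\<^esub> \<otimes>\<^bsub>R\<^esub> coords t s \<oplus>\<^bsub>R\<^esub> \<one>\<^bsub>R\<^esub> \<otimes>\<^bsub>R\<^esub> coords t' s"
  have c: "coords t \<in> coord_vectors" "coords t' \<in> coord_vectors" "coords (t \<oplus>\<^bsub>T\<^esub> t') \<in> coord_vectors"
    and l: "lin_comb (coords t) = t" "lin_comb (coords t') = t'" "lin_comb (coords (t \<oplus>\<^bsub>T\<^esub> t')) = t \<oplus>\<^bsub>T\<^esub> t'"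
    using coords t by auto
  have w: "?w \<in> coord_vectors" using c by (simp add: coord_vectors_def)
  have "lin_comb ?w = t \<oplus>\<^bsub>T\<^esub> t'" using lin_comb_linear[OF c(1,2) R.one_closed R.one_closed] l t by simp
  then have "minor_pairing m (t \<oplus>\<^bsub>T\<^esub> t') \<ominus>\<^bsub>M\<^esub> minor R (?w # vs) (j # cs) \<odot>\<^bsub>M\<^esub> m \<in> torsion"
    unfolding minor_pairing_def using minor_Cons_congruent[OF c(3) w _ m] l by simp
  moreover have "minor R (?w # vs) (j # cs) = minor R (coords t # vs) (j # cs) \<oplus>\<^bsub>R\<^esub> minor R (coords t' # vs) (j # cs)"
    using minor_Cons_coord_linear[OF c(1,2) R.one_closed R.one_closed] minor_coords_closed t by simp
  ultimately show ?thesis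
    using minor_coords_closed t m unfolding minor_pairing_def
    by (simp add: M.smult_l_distr a_minus_def M.minus_add M.a_assoc)
qed

lemma minor_pairing_smult:
  assumes r: "r \<in> carrier R" and m: "m \<in> carrier M" and t: "t \<in> carrier T"
  shows "minor_pairing (r \<odot>\<^bsub>M\<^esub> m) t \<ominus>\<^bsub>M\<^esub> minor_pairing m (f r \<otimes>\<^bsub>T\<^esub> t) \<in> torsion"
proof -
  let ?w = "\<lambda>s. r \<otimes>\<^bsub>R\<^esub> coords t s \<oplus>\<^bsub>R\<^esub> \<zero>\<^bsub>R\<^esub> \<otimes>\<^bsub>R\<^esub> coords t s"
  have rt: "f r \<otimes>\<^bsub>T\<^esub> t \<in> carrier T" using r t by simp
  have c: "coords t \<in> coord_vectors" "coords (f r \<otimes>\<^bsub>T\<^esub> t) \<in> coord_vectors"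
    and l: "lin_comb (coords t) = t" "lin_comb (coords (f r \<otimes>\<^bsub>T\<^esub> t)) = f r \<otimes>\<^bsub>T\<^esub> t"
    using coords t rt by auto
  have w: "?w \<in> coord_vectors" using c r by (simp add: coord_vectors_def)
  have "lin_comb ?w = f r \<otimes>\<^bsub>T\<^esub> t" using lin_comb_linear[OF c(1,1) r R.zero_closed] l t r by simp
  then have "minor R (?w # vs) (j # cs) \<odot>\<^bsub>M\<^esub> m \<ominus>\<^bsub>M\<^esub> minor_pairing m (f r \<otimes>\<^bsub>T\<^esub> t) \<in> torsion"
    unfolding minor_pairing_def using minor_Cons_congruent[OF w c(2) _ m] l by simp
  moreover have "minor R (?w # vs) (j # cs) = r \<otimes>\<^bsub>R\<^esub> minor R (coords t # vs) (j # cs)"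
    using minor_Cons_coord_linear[OF c(1,1) r R.zero_closed] minor_coords_closed[OF t] r by simp
  ultimately show ?thesis
    using minor_coords_closed[OF t] r m unfolding minor_pairing_def
    by (simp add: M.smult_assoc1 M.smult_left_commute)
qed

lemma minor_pairing_torsion:
  assumes m: "m \<in> carrier M" and t: "t \<in> carrier T" and d: "delta (m, t) \<in> tensor_relations R M T\<^sub>R"
  shows "minor_pairing m t \<in> torsion"
proof -
  interpret H: additive_subgroup torsion M by (rule torsion_additive_subgroup)
  have closed: "minor_pairing m t \<in> carrier M" if "m \<in> carrier M" "t \<in> carrier T" for m t
    using minor_coords_closed that unfolding minor_pairing_def by simp
  have "case_prod minor_pairing (m, t) \<in> torsion"
  proof (rule tensor_relations_eval_delta[OF M module_T\<^sub>R M.abelian_group_axioms torsion_additive_subgroup])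
    show "case_prod minor_pairing z \<in> carrier M" if "z \<in> carrier M \<times> carrier T\<^sub>R" for z
      using that closed by (auto simp: carrier_restrict_scalars)
    show "(m, t) \<in> carrier M \<times> carrier T\<^sub>R" using m t by (simp add: carrier_restrict_scalars)
    show "delta (m, t) \<in> tensor_relations R M T\<^sub>R" by (rule d)
  next
    fix m m' t assume "m \<in> carrier M" "m' \<in> carrier M" "t \<in> carrier T\<^sub>R"
    then show "case_prod minor_pairing (m \<oplus>\<^bsub>M\<^esub> m', t) \<ominus>\<^bsub>M\<^esub> case_prod minor_pairing (m, t)
        \<ominus>\<^bsub>M\<^esub> case_prod minor_pairing (m', t) \<in> torsion"
      using minor_coords_closed
      by (simp add: minor_pairing_def carrier_restrict_scalars M.smult_r_distr M.add_minus_summands)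
  next
    fix m t t' assume "m \<in> carrier M" "t \<in> carrier T\<^sub>R" "t' \<in> carrier T\<^sub>R"
    then show "case_prod minor_pairing (m, t \<oplus>\<^bsub>T\<^sub>R\<^esub> t') \<ominus>\<^bsub>M\<^esub> case_prod minor_pairing (m, t)
        \<ominus>\<^bsub>M\<^esub> case_prod minor_pairing (m, t') \<in> torsion"
      using minor_pairing_add_right by (simp add: carrier_restrict_scalars)
  next
    fix r m t assume "r \<in> carrier R" "m \<in> carrier M" "t \<in> carrier T\<^sub>R"
    then show "case_prod minor_pairing (r \<odot>\<^bsub>M\<^esub> m, t) \<ominus>\<^bsub>M\<^esub> case_prod minor_pairing (m, r \<odot>\<^bsub>T\<^sub>R\<^esub> t)
        \<in> torsion"
      using minor_pairing_smult by (simp add: carrier_restrict_scalars)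
  qed
  then show ?thesis by simp
qed

lemma minor_torsion_step:
  assumes m: "m \<in> carrier M"
  shows "minor R vs cs \<odot>\<^bsub>M\<^esub> m \<in> torsion"
proof -
  interpret H: additive_subgroup torsion M by (rule torsion_additive_subgroup)
  have jT: "j \<in> carrier T" using j S by auto
  obtain k :: nat where k: "delta (m, f (a [^]\<^bsub>R\<^esub> k) \<otimes>\<^bsub>T\<^esub> j) \<in> tensor_relations R M T\<^sub>R"
    using pure_tensor_torsion[OF m jT] by blast
  let ?t = "f (a [^]\<^bsub>R\<^esub> k) \<otimes>\<^bsub>T\<^esub> j"
  have t: "?t \<in> carrier T" using a jT by simp
  let ?e = "\<lambda>s. if s = j then a [^]\<^bsub>R\<^esub> k else \<zero>\<^bsub>R\<^esub>"
  have e: "?e \<in> coord_vectors" using a by (simp add: coord_vectors_def)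
  have "lin_comb ?e = (\<Oplus>\<^bsub>T\<^esub>s\<in>S. if j = s then ?t else \<zero>\<^bsub>T\<^esub>)"
    unfolding lin_comb_def by (rule T.finsum_cong'[OF refl]) (use S a in auto)
  also have "\<dots> = ?t" using T.finsum_singleton[OF j(1) S(1), of "\<lambda>_. ?t"] t by simp
  finally have "minor R (coords ?t # vs) (j # cs) \<odot>\<^bsub>M\<^esub> m \<ominus>\<^bsub>M\<^esub> minor R (?e # vs) (j # cs) \<odot>\<^bsub>M\<^esub> m \<in> torsion"
    using minor_Cons_congruent[OF _ e _ m] coords[OF t] by simp
  moreover have "minor R (coords ?t # vs) (j # cs) \<odot>\<^bsub>M\<^esub> m \<in> torsion"
    using minor_pairing_torsion[OF m t k] by (simp add: minor_pairing_def)
  ultimately have "minor R (?e # vs) (j # cs) \<odot>\<^bsub>M\<^esub> m \<in> torsion"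
    using M.minus_minus_cancel[OF M.smult_closed[OF minor_Cons_closed[OF conjunct1[OF coords[OF t]]] m]
        M.smult_closed[OF minor_Cons_closed[OF e] m]]
    by (metis H.a_closed H.a_inv_closed a_minus_def)
  moreover have "minor R (?e # vs) (j # cs) = a [^]\<^bsub>R\<^esub> k \<otimes>\<^bsub>R\<^esub> minor R vs cs"
    using R.minor_Cons_Cons_vanishing[OF entries_extended, of ?e] a j(2) by auto
  moreover have minor: "minor R vs cs \<in> carrier R"
    by (rule R.minor_closed) (use entries_extended in \<open>auto simp: entries_in_def\<close>)
  ultimately have "(a [^]\<^bsub>R\<^esub> k) \<odot>\<^bsub>M\<^esub> (minor R vs cs \<odot>\<^bsub>M\<^esub> m) \<in> torsion"
    using a m by (simp add: M.smult_assoc1)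
  then show ?thesis using M.power_torsion_saturated[OF a] minor m by blast
qed
end

lemma minors_torsion:
  assumes "set vs \<subseteq> relation_vectors" "length vs = length cs" "distinct cs" "set cs \<subseteq> S"
    and "m \<in> carrier M"
  shows "minor R vs cs \<odot>\<^bsub>M\<^esub> m \<in> torsion"
  using assms
proof (induction "card S - length cs" arbitrary: vs cs m rule: less_induct)
  case less
  have card_cs: "card (set cs) = length cs" by (rule distinct_card[OF less.prems(3)])
  show ?case
  proof (cases "S \<subseteq> set cs")
    case True
    then have "set cs = S" using less.prems(4) by blast
    then have "minor R vs cs = \<zero>\<^bsub>R\<^esub>" using relation_minors_vanish less.prems by blast
    then show ?thesis
      using less.prems(5) M.submoduleE(2) torsion_submodule by (simp add: power_torsion_def exI[of _ 0])
  next
    case False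
    then obtain j where j: "j \<in> S" "j \<notin> set cs" by blast
    have "card (set cs) < card S"
      using psubset_card_mono[OF S(1)] less.prems(4) j by blast
    then have extended: "minor R (w # vs) (j # cs) \<odot>\<^bsub>M\<^esub> m' \<in> torsion"
      if "w \<in> relation_vectors" "m' \<in> carrier M" for w m'
      using less.hyps[of "j # cs" "w # vs" m'] less.prems j that card_cs by auto
    show ?thesis
      by (rule minor_torsion_step[OF less.prems(1,2,4) j extended less.prems(5)])
  qed
qed

lemma carrier_torsion: "carrier M \<subseteq> torsion"
  using minors_torsion[of "[]" "[]"] by auto

end

context base_change_setting
begin

lemma Ann_loc_of_base_change_finite:
  assumes fin: "finite_ext R T f" and inj: "inj_on f (carrier R)"
    and a: "a \<in> carrier R" and fa: "f a \<in> Ann_loc T N"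
  shows "a \<in> Ann_loc R M"
proof -
  obtain S where "finite S" "S \<subseteq> carrier T"
    "\<And>t. t \<in> carrier T \<Longrightarrow> \<exists>c. c \<in> S \<rightarrow> carrier R \<and> t = (\<Oplus>\<^bsub>T\<^esub>s\<in>S. f (c s) \<otimes>\<^bsub>T\<^esub> s)"
    using fin unfolding finite_ext_def by blast
  then interpret finite_base_change R T f M a S
    using inj a base_change_pure_tensor_torsion[OF a fa]
    by (intro finite_base_change.intro base_change_setting_axioms finite_base_change_axioms.intro) auto
  show ?thesis using carrier_torsion Ann_loc_iff_power_torsion[OF M a] by simp
qed

end

theorem proposition3p1:
  fixes R :: "'r ring" and T :: "'t ring" and f :: "'r \<Rightarrow> 't" and M :: "('r,'m) module"
  assumes "cring R" and "cring T" and "f \<in> ring_hom R T" and "module R M"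
  shows "Ann_loc R M \<subseteq> {a \<in> carrier R. f a \<in> Ann_loc T (base_change R T f M)}
    \<and> (inj_on f (carrier R) \<and>
         (flat TYPE('t) R M \<or> pure_ext TYPE('m) R T f \<or> finite_ext R T f) \<longrightarrow>
       Ann_loc R M = {a \<in> carrier R. f a \<in> Ann_loc T (base_change R T f M)})"
proof -
  interpret base_change_setting R T f M by (intro base_change_setting.intro assms)
  have "{a \<in> carrier R. f a \<in> Ann_loc T N} \<subseteq> Ann_loc R M"
    if inj: "inj_on f (carrier R)" and cases: "flat TYPE('t) R M \<or> pure_ext TYPE('m) R T f \<or> finite_ext R T f"
  proof clarify
    fix a assume a: "a \<in> carrier R" and fa: "f a \<in> Ann_loc T N"
    from cases show "a \<in> Ann_loc R M"
    proof (elim disjE)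
      assume "flat TYPE('t) R M"
      then show ?thesis using Ann_loc_of_base_change[OF _ a fa] flat_unit_tensor inj by blast
    next
      assume "pure_ext TYPE('m) R T f"
      then show ?thesis using Ann_loc_of_base_change[OF _ a fa] pure_ext_unit_tensor by blast
    next
      assume "finite_ext R T f"
      then show ?thesis using Ann_loc_of_base_change_finite inj a fa by blast
    qed
  qed
  then show ?thesis using Ann_loc_subset_base_change by blast
qed

end
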